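(* Let $\Sigma$ be a compact connected oriented surface with nonempty boundary, $\phi:\pi_1(\Sigma)\to\mathrm{SO}_0(n,2)$, and let $\mathbf J$ be a smooth $\phi$-equivariant map $\tilde\Sigma\to\mathcal J(\mathbb R^{n+2},\Omega)$ which, on a collar $\partial\Sigma\times[0,1]$, does not depend on the collar coordinate. Then the eta invariant of the boundary operator $A_{i\mathbf J}=i\mathbf J\frac{d}{dx}$, acting on sections of $\mathcal E|_{\partial\Sigma}$, vanishes: $\eta(A_{i\mathbf J})=0$.
   Context: $\Omega$ is the quadratic form $x_1^2+\dots+x_n^2-x_{n+1}^2-x_{n+2}^2$ on $\mathbb R^{n+2}$ (matrix $I_{n,2}=\mathrm{diag}(I_n,-I_2)$), extended complex-bilinearly to $\mathbb C^{n+2}$; $\mathrm{SO}_0(n,2)$ is the identity component of its orthogonal group. $\mathcal J(\mathbb R^{n+2},\Omega)=\{J\in\mathrm{SO}_0(n,2):J^2=\mathrm{Id},\ \Omega(\cdot,J\bar\cdot)\text{ positive definite}\}$ (the conjugates of $I_{n,2}$), a model of the symmetric space of $\mathrm{SO}_0(n,2)$. $\mathcal E=\tilde\Sigma\times_\phi\mathbb C^{n+2}$; $x$ is an arclength coordinate on $\partial\Sigma$ for a metric that is a product near the boundary, oriented as the boundary of $\Sigma$. $A_{i\mathbf J}$ is self-adjoint for $\int_{\partial\Sigma}\Omega(s_1,\mathbf J\bar s_2)dx$, and the eta invariant is the value at $s=0$ of the meromorphic continuation of $\sum_{\lambda\ne0}\mathrm{sgn}(\lambda)|\lambda|^{-s}$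 over its eigenvalues. *)

theory Defs
  imports "HOL-Complex_Analysis.Complex_Analysis"
begin

text \<open>Real and complex (n+2)-vectors/matrices are represented by functions on indices,
  with all entries outside the range {0..<N} (N = n+2) equal to zero.\<close>

type_synonym rmat = "nat \<Rightarrow> nat \<Rightarrow> real"
type_synonym cvec = "nat \<Rightarrow> complex"

definition supported_mat :: "nat \<Rightarrow> rmat \<Rightarrow> bool" where
  "supported_mat N A \<longleftrightarrow> (\<forall>i j. (N \<le> i \<or> N \<le> j) \<longrightarrow> A i j = 0)"

definition mmul :: "nat \<Rightarrow> rmat \<Rightarrow> rmat \<Rightarrow> rmat" where
  "mmul N A B = (\<lambda>i j. if i < N \<and> j < N then (\<Sum>k<N. A i k * B k j) else 0)"

definition idm :: "nat \<Rightarrow> rmat" where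
  "idm N = (\<lambda>i j. if i < N \<and> j < N \<and> i = j then 1 else 0)"

definition mtrans :: "rmat \<Rightarrow> rmat" where
  "mtrans A = (\<lambda>i j. A j i)"

definition Imat :: "nat \<Rightarrow> rmat" where
  "Imat n = (\<lambda>i j. if i = j \<and> i < n then 1 else if i = j \<and> n \<le> i \<and> i < n + 2 then -1 else 0)"

text \<open>Omega, extended complex-bilinearly to C^{n+2}.\<close>
definition Omega :: "nat \<Rightarrow> cvec \<Rightarrow> cvec \<Rightarrow> complex" where
  "Omega n v w = (\<Sum>i<n+2. complex_of_real (Imat n i i) * v i * w i)"

definition cmatvec :: "nat \<Rightarrow> rmat \<Rightarrow> cvec \<Rightarrow> cvec" where
  "cmatvec N A v = (\<lambda>i. if i < N then (\<Sum>j<N. complex_of_real (A i j) * v j) else 0)"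

definition O_n2 :: "nat \<Rightarrow> rmat set" where
  "O_n2 n = {A. supported_mat (n+2) A \<and> mmul (n+2) (mtrans A) (mmul (n+2) (Imat n) A) = Imat n}"

text \<open>SO_0(n,2): the identity component of O(n,2) (a Lie group, so the path component
  of the identity).\<close>
definition SO0_n2 :: "nat \<Rightarrow> rmat set" where
  "SO0_n2 n = {A. \<exists>\<gamma> :: real \<Rightarrow> rmat.
      (\<forall>i j. continuous_on {0..1} (\<lambda>t. \<gamma> t i j)) \<and>
      (\<forall>t\<in>{0..1}. \<gamma> t \<in> O_n2 n) \<and> \<gamma> 0 = idm (n+2) \<and> \<gamma> 1 = A}"

definition Jspace :: "nat \<Rightarrow> rmat set" where
  "Jspace n = {J. J \<in> SO0_n2 n \<and> mmul (n+2) J J = idm (n+2) \<and>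
      (\<forall>v :: cvec. (\<forall>i\<ge>n+2. v i = 0) \<and> (\<exists>i<n+2. v i \<noteq> 0) \<longrightarrow>
         Im (Omega n v (cmatvec (n+2) J (\<lambda>i. cnj (v i)))) = 0 \<and>
         Re (Omega n v (cmatvec (n+2) J (\<lambda>i. cnj (v i)))) > 0)}"

definition smooth_fun :: "(real \<Rightarrow> 'a::real_normed_vector) \<Rightarrow> bool" where
  "smooth_fun f \<longleftrightarrow> (\<exists>D :: nat \<Rightarrow> real \<Rightarrow> 'a. D 0 = f \<and>
      (\<forall>k x. (D k has_vector_derivative D (Suc k) x) (at x)))"

text \<open>Boundary data: c boundary circles, the k-th of length L k, with holonomy g k,
  and the restriction Jb k of the equivariant map J to a lift R of the k-th boundary circle
  (arclength coordinate x), satisfying Jb k (x + L k) = g k * Jb k x * (g k)^-1.\<close>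
definition boundary_data ::
  "nat \<Rightarrow> nat \<Rightarrow> (nat \<Rightarrow> real) \<Rightarrow> (nat \<Rightarrow> rmat) \<Rightarrow> (nat \<Rightarrow> real \<Rightarrow> rmat) \<Rightarrow> bool" where
  "boundary_data n c L g Jb \<longleftrightarrow>
     (\<forall>k<c. L k > 0 \<and> g k \<in> SO0_n2 n \<and>
        (\<forall>i j. smooth_fun (\<lambda>x. Jb k x i j)) \<and>
        (\<forall>x. Jb k x \<in> Jspace n) \<and>
        (\<forall>x. mmul (n+2) (Jb k (x + L k)) (g k) = mmul (n+2) (g k) (Jb k x)))"

text \<open>(Smooth) sections of E restricted to the boundary: on the k-th circle, a smooth
  map s k : R \<rightarrow> C^{n+2} with s k (x + L k) = g k (s k x).\<close>
definition bsection ::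
  "nat \<Rightarrow> nat \<Rightarrow> (nat \<Rightarrow> real) \<Rightarrow> (nat \<Rightarrow> rmat) \<Rightarrow> (nat \<Rightarrow> real \<Rightarrow> cvec) \<Rightarrow> bool" where
  "bsection n c L g s \<longleftrightarrow>
     (\<forall>k x i. (c \<le> k \<or> n + 2 \<le> i) \<longrightarrow> s k x i = 0) \<and>
     (\<forall>k<c. (\<forall>i. smooth_fun (\<lambda>x. s k x i)) \<and>
        (\<forall>x. s k (x + L k) = cmatvec (n+2) (g k) (s k x)))"

definition eigensection ::
  "nat \<Rightarrow> nat \<Rightarrow> (nat \<Rightarrow> real) \<Rightarrow> (nat \<Rightarrow> rmat) \<Rightarrow> (nat \<Rightarrow> real \<Rightarrow> rmat) \<Rightarrow> real
     \<Rightarrow> (nat \<Rightarrow> real \<Rightarrow> cvec) \<Rightarrow> bool" where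
  "eigensection n c L g Jb lam s \<longleftrightarrow> bsection n c L g s \<and>
     (\<forall>k<c. \<forall>x. \<forall>i<n+2.
        \<i> * (\<Sum>j<n+2. complex_of_real (Jb k x i j) * vector_derivative (\<lambda>t. s k t j) (at x))
        = complex_of_real lam * s k x i)"

definition lin_indep_sections :: "nat \<Rightarrow> (nat \<Rightarrow> nat \<Rightarrow> real \<Rightarrow> cvec) \<Rightarrow> bool" where
  "lin_indep_sections m S \<longleftrightarrow>
     (\<forall>a :: nat \<Rightarrow> complex. (\<forall>k x i. (\<Sum>j<m. a j * S j k x i) = 0) \<longrightarrow> (\<forall>j<m. a j = 0))"

definition eig_mult ::
  "nat \<Rightarrow> nat \<Rightarrow> (nat \<Rightarrow> real) \<Rightarrow> (nat \<Rightarrow> rmat) \<Rightarrow> (nat \<Rightarrow> real \<Rightarrow> rmat) \<Rightarrow> real \<Rightarrow> nat" where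
  "eig_mult n c L g Jb lam =
     Sup {m. \<exists>S. (\<forall>j<m. eigensection n c L g Jb lam (S j)) \<and> lin_indep_sections m S}"

text \<open>The eta invariant vanishes: the series sum over nonzero eigenvalues (with multiplicity)
  of sgn(lam) |lam|^-s converges for Re s large, and its meromorphic continuation to a
  connected open set containing 0 is regular at 0 with value 0.\<close>
definition eta_vanishes ::
  "nat \<Rightarrow> nat \<Rightarrow> (nat \<Rightarrow> real) \<Rightarrow> (nat \<Rightarrow> rmat) \<Rightarrow> (nat \<Rightarrow> real \<Rightarrow> rmat) \<Rightarrow> bool" where
  "eta_vanishes n c L g Jb \<longleftrightarrow>
     (let mu = eig_mult n c L g Jb;
          Spec = {lam. lam \<noteq> 0 \<and> mu lam > 0};
          term = (\<lambda>s lam. of_nat (mu lam) * complex_of_real (sgn lam)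
                    * exp (- s * complex_of_real (ln \<bar>lam\<bar>)))
      in \<exists>\<sigma> U f. open U \<and> connected U \<and> 0 \<in> U \<and> {s. Re s > \<sigma>} \<subseteq> U \<and>
           f meromorphic_on U \<and>
           (\<forall>s. Re s > \<sigma> \<longrightarrow> (term s has_sum f s) Spec) \<and>
           (f \<longlongrightarrow> 0) (at 0))"

end

theory Submission
  imports Defs
begin

text \<open>
  Complex conjugation turns an eigensection of \<open>i J d/dx\<close> for \<open>\<lambda>\<close> into one for \<open>-\<lambda>\<close>,
  so the spectrum counted with multiplicity is symmetric and the eta series, wherever it
  converges, is identically zero; the continuation can then be taken to be \<open>0\<close>.

  Absolute convergence for \<open>Re s > 2\<close> follows from a uniform window bound: there is
  \<open>\<delta> > 0\<close> such that a sum of eigensections with eigenvalues in an interval \<open>[a, a + \<delta>]\<close>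
  is determined by its values at one base point on each of the \<open>c\<close> boundary circles, so
  such a window carries at most \<open>c (n + 2)\<close> eigenvalues with multiplicity. For the
  window bound write \<open>u = \<Sum> V\<^sub>\<lambda>\<close> with \<open>u(0) = 0\<close> and \<open>f = \<Sum> (\<lambda> - a) V\<^sub>\<lambda>\<close>, so
  that \<open>u' = -i J (a u + f)\<close>. The positive definite Hermitian form \<open>\<Omega>(v, J conj w)\<close>
  gives a Gronwall estimate of the energy of \<open>u\<close> by that of \<open>f\<close>, while eigensections
  for distinct eigenvalues are orthogonal for the integrated form, so the energy of
  \<open>f\<close> is at most \<open>\<delta>\<^sup>2\<close> times that of \<open>u\<close>. For small \<open>\<delta>\<close> this forces \<open>u = 0\<close>.
\<close>

declare sum.lessThan_Suc[simp del] add_2_eq_Suc[simp del] add_2_eq_Suc'[simp del]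

section \<open>The form \<open>\<Omega>\<close> and its orthogonal group\<close>

lemma sum_Imat_row: "k < N \<Longrightarrow> (\<Sum>l<N. Imat n k l * f l) = Imat n k k * f k"
proof -
  assume k: "k < N"
  have "(\<Sum>l<N. Imat n k l * f l) = (\<Sum>l<N. if l = k then Imat n k k * f l else 0)"
    by (rule sum.cong) (auto simp: Imat_def)
  also have "\<dots> = Imat n k k * f k" using k by simp
  finally show ?thesis .
qed

lemma sum_of_real_Imat_row:
  "k < N \<Longrightarrow> (\<Sum>l<N. of_real (Imat n k l) * (f l :: 'a::real_algebra_1)) = of_real (Imat n k k) * f k"
proof -
  assume k: "k < N"
  have "(\<Sum>l<N. of_real (Imat n k l) * f l) = (\<Sum>l<N. if l = k then of_real (Imat n k k) * (f l :: 'a) else 0)"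
    by (rule sum.cong) (auto simp: Imat_def)
  also have "\<dots> = of_real (Imat n k k) * f k" using k by simp
  finally show ?thesis .
qed

lemma O_n2_entry:
  assumes A: "A \<in> O_n2 n" and i: "i < n+2" and j: "j < n+2"
  shows "(\<Sum>k<n+2. Imat n k k * A k i * A k j) = Imat n i j"
proof -
  from A have "mmul (n+2) (mtrans A) (mmul (n+2) (Imat n) A) i j = Imat n i j"
    by (simp add: O_n2_def)
  hence "(\<Sum>k<n+2. A k i * (\<Sum>l<n+2. Imat n k l * A l j)) = Imat n i j"
    using i j by (simp add: mmul_def mtrans_def)
  moreover have "(\<Sum>k<n+2. A k i * (\<Sum>l<n+2. Imat n k l * A l j)) = (\<Sum>k<n+2. Imat n k k * A k i * A k j)"
    by (rule sum.cong) (simp_all add: sum_Imat_row)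
  ultimately show ?thesis by simp
qed

lemma Omega_O_n2_invariant:
  assumes A: "A \<in> O_n2 n"
  shows "Omega n (cmatvec (n+2) A v) (cmatvec (n+2) A w) = Omega n v w"
proof -
  let ?N = "n+2"
  have "Omega n (cmatvec ?N A v) (cmatvec ?N A w) =
      (\<Sum>k<?N. of_real (Imat n k k) * ((\<Sum>i<?N. of_real (A k i) * v i) * (\<Sum>j<?N. of_real (A k j) * w j)))"
    unfolding Omega_def cmatvec_def by (simp add: mult.assoc)
  also have "\<dots> = (\<Sum>k<?N. \<Sum>i<?N. \<Sum>j<?N. of_real (Imat n k k * A k i * A k j) * (v i * w j))"
    by (simp only: sum_product, simp add: sum_distrib_left mult_ac)
  also have "\<dots> = (\<Sum>i<?N. \<Sum>j<?N. \<Sum>k<?N. of_real (Imat n k k * A k i * A k j) * (v i * w j))"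
    by (subst sum.swap, rule sum.cong, simp, subst sum.swap, simp)
  also have "\<dots> = (\<Sum>i<?N. \<Sum>j<?N. of_real (Imat n i j) * (v i * w j))"
  proof (intro sum.cong refl)
    fix i j assume "i \<in> {..<?N}" "j \<in> {..<?N}"
    then have "(\<Sum>k<?N. Imat n k k * A k i * A k j) = Imat n i j" by (simp add: O_n2_entry[OF A])
    then show "(\<Sum>k<?N. of_real (Imat n k k * A k i * A k j) * (v i * w j)) = of_real (Imat n i j) * (v i * w j)"
      by (simp only: of_real_sum[symmetric] sum_distrib_right[symmetric])
  qed
  also have "\<dots> = (\<Sum>i<?N. of_real (Imat n i i) * (v i * w i))"
    by (rule sum.cong[OF refl]) (simp add: sum_of_real_Imat_row)
  also have "\<dots> = Omega n v w" unfolding Omega_def by (simp add: mult.assoc)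
  finally show ?thesis .
qed

lemma Omega_cong:
  "(\<And>i. i < n+2 \<Longrightarrow> v i = v' i) \<Longrightarrow> (\<And>i. i < n+2 \<Longrightarrow> w i = w' i) \<Longrightarrow> Omega n v w = Omega n v' w'"
  unfolding Omega_def by (rule sum.cong) auto

lemma cmatvec_cong: "(\<And>i. i < N \<Longrightarrow> v i = v' i) \<Longrightarrow> cmatvec N A v = cmatvec N A v'"
  unfolding cmatvec_def by (rule ext) (auto intro!: sum.cong)

lemma Omega_commute: "Omega n v w = Omega n w v"
  unfolding Omega_def by (simp add: mult_ac)

lemma cmatvec_in: "i < N \<Longrightarrow> cmatvec N A v i = (\<Sum>j<N. complex_of_real (A i j) * v j)"
  by (simp add: cmatvec_def)

lemma cnj_Omega: "cnj (Omega n v w) = Omega n (\<lambda>i. cnj (v i)) (\<lambda>i. cnj (w i))"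
  unfolding Omega_def by simp

lemma cnj_cmatvec: "(\<lambda>i. cnj (cmatvec N A v i)) = cmatvec N A (\<lambda>i. cnj (v i))"
  unfolding cmatvec_def by (rule ext) simp

lemma Omega_sum_left: "Omega n (\<lambda>i. \<Sum>p\<in>P. f p i) w = (\<Sum>p\<in>P. Omega n (f p) w)"
  unfolding Omega_def by (subst sum.swap) (simp add: sum_distrib_left sum_distrib_right)

lemma Omega_sum_right: "Omega n w (\<lambda>i. \<Sum>p\<in>P. f p i) = (\<Sum>p\<in>P. Omega n w (f p))"
  using Omega_sum_left[of n f P w] by (simp add: Omega_commute)

lemma Omega_scale_left: "Omega n (\<lambda>i. a * v i) w = a * Omega n v w"
  unfolding Omega_def by (simp add: sum_distrib_left mult_ac)

lemma Omega_scale_right: "Omega n w (\<lambda>i. a * v i) = a * Omega n w v"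
  unfolding Omega_def by (simp add: sum_distrib_left mult_ac)

lemma Omega_add_left: "Omega n (\<lambda>i. v i + v' i) w = Omega n v w + Omega n v' w"
  unfolding Omega_def by (simp add: sum.distrib algebra_simps)

lemma Omega_diff_left: "Omega n (\<lambda>i. v i - v' i) w = Omega n v w - Omega n v' w"
  unfolding Omega_def by (simp add: sum_subtractf algebra_simps)

lemma Omega_diff_right: "Omega n w (\<lambda>i. v i - v' i) = Omega n w v - Omega n w v'"
  unfolding Omega_def by (simp add: sum_subtractf algebra_simps)

lemma cmatvec_sum: "cmatvec N A (\<lambda>i. \<Sum>p\<in>P. f p i) = (\<lambda>i. \<Sum>p\<in>P. cmatvec N A (f p) i)"
  unfolding cmatvec_def by (rule ext) (auto simp: sum_distrib_left intro: sum.swap)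

lemma cmatvec_scale: "cmatvec N A (\<lambda>i. a * v i) = (\<lambda>i. a * cmatvec N A v i)"
  unfolding cmatvec_def by (rule ext) (auto simp: sum_distrib_left mult_ac)

lemma cmatvec_diff: "cmatvec N A (\<lambda>i. v i - w i) = (\<lambda>i. cmatvec N A v i - cmatvec N A w i)"
  unfolding cmatvec_def by (rule ext) (auto simp: sum_subtractf algebra_simps)

lemma Omega_cnj_self_real: "Im (Omega n v (\<lambda>i. cnj (v i))) = 0"
proof -
  have "cnj (Omega n v (\<lambda>i. cnj (v i))) = Omega n v (\<lambda>i. cnj (v i))"
    unfolding cnj_Omega by (simp add: Omega_commute)
  then show ?thesis by (metis Reals_cnj_iff complex_is_Real_iff)
qed

lemma O_n2_cmatvec_eq_0D:
  assumes A: "A \<in> O_n2 n" and z: "\<And>i. i < n+2 \<Longrightarrow> cmatvec (n+2) A v i = 0" and i: "i < n+2"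
  shows "v i = 0"
proof -
  define e where "e = (\<lambda>j. if j = i then (1::complex) else 0)"
  have "Omega n v e = Omega n (cmatvec (n+2) A v) (cmatvec (n+2) A e)"
    by (rule Omega_O_n2_invariant[OF A, symmetric])
  also have "\<dots> = Omega n (\<lambda>_. 0) (cmatvec (n+2) A e)"
    by (rule Omega_cong) (simp_all add: z)
  also have "\<dots> = 0" by (simp add: Omega_def)
  finally have "of_real (Imat n i i) * v i = 0"
    unfolding Omega_def e_def using i by (simp add: if_distrib cong: if_cong)
  moreover have "Imat n i i \<noteq> 0" using i by (simp add: Imat_def)
  ultimately show ?thesis by simp
qed

lemma SO0_n2_subset_O_n2: "SO0_n2 n \<subseteq> O_n2 n"
  unfolding SO0_n2_def by force

lemma Jspace_subset_O_n2: "Jspace n \<subseteq> O_n2 n"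
  unfolding Jspace_def using SO0_n2_subset_O_n2 by blast

lemma Jspace_involution:
  assumes J: "J \<in> Jspace n" and i: "i < n+2"
  shows "cmatvec (n+2) J (cmatvec (n+2) J v) i = v i"
proof -
  let ?N = "n+2"
  have JJ: "(\<Sum>k<?N. J i k * J k j) = (if j = i then 1 else 0)" if "j < ?N" for j
  proof -
    have "mmul ?N J J i j = idm ?N i j" using J by (simp add: Jspace_def)
    thus ?thesis using i that by (auto simp: mmul_def idm_def)
  qed
  have "cmatvec ?N J (cmatvec ?N J v) i = (\<Sum>k<?N. of_real (J i k) * (\<Sum>j<?N. of_real (J k j) * v j))"
    using i by (simp add: cmatvec_def)
  also have "\<dots> = (\<Sum>j<?N. \<Sum>k<?N. of_real (J i k * J k j) * v j)"
    by (subst sum.swap) (simp add: sum_distrib_left mult_ac)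
  also have "\<dots> = (\<Sum>j<?N. of_real (\<Sum>k<?N. J i k * J k j) * v j)"
    by (simp only: of_real_sum sum_distrib_right)
  also have "\<dots> = (\<Sum>j<?N. if j = i then v j else 0)"
    by (rule sum.cong[OF refl]) (simp add: JJ)
  also have "\<dots> = v i" using i by simp
  finally show ?thesis .
qed

lemma Omega_Jspace_self_adjoint:
  assumes J: "J \<in> Jspace n"
  shows "Omega n (cmatvec (n+2) J v) w = Omega n v (cmatvec (n+2) J w)"
proof -
  have "Omega n (cmatvec (n+2) J v) w = Omega n (cmatvec (n+2) J v) (cmatvec (n+2) J (cmatvec (n+2) J w))"
    by (rule Omega_cong) (simp_all add: Jspace_involution[OF J])
  also have "\<dots> = Omega n v (cmatvec (n+2) J w)"
    using J Jspace_subset_O_n2 by (intro Omega_O_n2_invariant) auto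
  finally show ?thesis .
qed

section \<open>The Hermitian form \<open>\<Omega>(v, J conj w)\<close>\<close>

definition hform :: "nat \<Rightarrow> rmat \<Rightarrow> cvec \<Rightarrow> cvec \<Rightarrow> complex" where
  "hform n J v w = Omega n v (cmatvec (n+2) J (\<lambda>i. cnj (w i)))"

lemma hform_expand:
  "hform n J v w = (\<Sum>i<n+2. of_real (Imat n i i) * v i * (\<Sum>j<n+2. of_real (J i j) * cnj (w j)))"
  unfolding hform_def Omega_def by (rule sum.cong) (simp_all add: cmatvec_in)

lemma cnj_hform:
  assumes J: "J \<in> Jspace n"
  shows "cnj (hform n J v w) = hform n J w v"
proof -
  have "cnj (hform n J v w) = Omega n (cmatvec (n+2) J w) (\<lambda>i. cnj (v i))"
    unfolding hform_def cnj_Omega cnj_cmatvec by (simp add: Omega_commute)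
  also have "\<dots> = hform n J w v" unfolding hform_def by (rule Omega_Jspace_self_adjoint[OF J])
  finally show ?thesis .
qed

lemma hform_cong:
  assumes "\<And>i. i < n+2 \<Longrightarrow> v i = v' i" and "\<And>i. i < n+2 \<Longrightarrow> w i = w' i"
  shows "hform n J v w = hform n J v' w'"
proof -
  have "cmatvec (n+2) J (\<lambda>i. cnj (w i)) = cmatvec (n+2) J (\<lambda>i. cnj (w' i))"
    by (rule cmatvec_cong) (simp add: assms)
  then show ?thesis unfolding hform_def by (intro Omega_cong) (simp_all add: assms)
qed

lemma hform_self_real: "J \<in> Jspace n \<Longrightarrow> Im (hform n J v v) = 0"
  using cnj_hform[of J n v v] by (metis Reals_cnj_iff complex_is_Real_iff)

lemma hform_self_pos:
  assumes J: "J \<in> Jspace n" and i: "i < n+2" "v i \<noteq> 0"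
  shows "Re (hform n J v v) > 0"
proof -
  define v' where "v' = (\<lambda>i. if i < n+2 then v i else 0)"
  have "(\<forall>i\<ge>n+2. v' i = 0) \<and> (\<exists>i<n+2. v' i \<noteq> 0)" using i by (auto simp: v'_def)
  then have "Re (hform n J v' v') > 0" using J unfolding Jspace_def hform_def by blast
  moreover have "hform n J v v = hform n J v' v'" by (rule hform_cong) (simp_all add: v'_def)
  ultimately show ?thesis by simp
qed

lemma hform_zero_left: "(\<And>i. i < n+2 \<Longrightarrow> v i = 0) \<Longrightarrow> hform n J v w = 0"
  unfolding hform_def Omega_def by simp

lemma hform_zero_right: "(\<And>i. i < n+2 \<Longrightarrow> w i = 0) \<Longrightarrow> hform n J v w = 0"
  unfolding hform_expand by simp

lemma hform_self_nonneg: "J \<in> Jspace n \<Longrightarrow> Re (hform n J v v) \<ge> 0"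
  by (cases "\<exists>i<n+2. v i \<noteq> 0") (auto dest: hform_self_pos intro: less_imp_le simp: hform_zero_left)

lemma hform_self_eq_0D: "J \<in> Jspace n \<Longrightarrow> Re (hform n J v v) = 0 \<Longrightarrow> i < n+2 \<Longrightarrow> v i = 0"
  using hform_self_pos by fastforce

lemma hform_diff_left: "hform n J (\<lambda>i. v i - w i) z = hform n J v z - hform n J w z"
  unfolding hform_def by (rule Omega_diff_left)

lemma hform_scale_left: "hform n J (\<lambda>i. a * v i) z = a * hform n J v z"
  unfolding hform_def by (rule Omega_scale_left)

lemma hform_sum_left: "hform n J (\<lambda>i. \<Sum>p\<in>P. f p i) z = (\<Sum>p\<in>P. hform n J (f p) z)"
  unfolding hform_def by (rule Omega_sum_left)

lemma hform_diff_right: "hform n J z (\<lambda>i. v i - w i) = hform n J z v - hform n J z w"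
  unfolding hform_def by (simp add: cmatvec_diff Omega_diff_right)

lemma hform_scale_right: "hform n J z (\<lambda>i. a * v i) = cnj a * hform n J z v"
  unfolding hform_def by (simp add: cmatvec_scale Omega_scale_right)

lemma hform_sum_right: "hform n J z (\<lambda>i. \<Sum>p\<in>P. f p i) = (\<Sum>p\<in>P. hform n J z (f p))"
  unfolding hform_def by (simp add: cmatvec_sum Omega_sum_right)

lemma hform_Cauchy_Schwarz:
  assumes J: "J \<in> Jspace n"
  shows "(cmod (hform n J v w))^2 \<le> Re (hform n J v v) * Re (hform n J w w)"
proof (cases "Re (hform n J w w) = 0")
  case True
  then have "hform n J v w = 0" by (intro hform_zero_right) (rule hform_self_eq_0D[OF J True])
  then show ?thesis using hform_self_nonneg[OF J, of v] hform_self_nonneg[OF J, of w] by simp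
next
  case False
  define r where "r = Re (hform n J w w)"
  have rpos: "r > 0" using False hform_self_nonneg[OF J, of w] by (simp add: r_def)
  have wr: "hform n J w w = of_real r"
    using hform_self_real[OF J, of w] by (simp add: r_def complex_eq_iff)
  define p where "p = hform n J v w"
  have wv: "hform n J w v = cnj p" unfolding p_def using cnj_hform[OF J, of v w] by simp
  define t where "t = p / of_real r"
  define u where "u = (\<lambda>i. v i - t * w i)"
  have pc: "p * cnj p = of_real ((cmod p)^2)" by (rule complex_norm_square[symmetric])
  have "hform n J u u = hform n J v v - cnj t * p - t * cnj p + t * cnj t * of_real r"
    unfolding u_def hform_diff_left hform_diff_right hform_scale_left hform_scale_right wr wv
      p_def[symmetric]
    by (simp add: algebra_simps)
  also have "\<dots> = hform n J v v - of_real ((cmod p)^2 / r)"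
    using rpos unfolding t_def by (simp add: pc mult.commute[of "cnj p"])
  finally have "Re (hform n J u u) = Re (hform n J v v) - (cmod p)^2 / r" by simp
  with hform_self_nonneg[OF J, of u] have "(cmod p)^2 / r \<le> Re (hform n J v v)" by simp
  then show ?thesis using rpos by (simp add: p_def r_def field_simps)
qed

lemma hform_cmatvec_Jspace:
  assumes J: "J \<in> Jspace n"
  shows "hform n J (cmatvec (n+2) J v) (cmatvec (n+2) J w) = hform n J v w"
  unfolding hform_def cnj_cmatvec
  using J Jspace_subset_O_n2 by (intro Omega_O_n2_invariant) auto

lemma Omega_cnj_eq_hform:
  assumes J: "J \<in> Jspace n"
  shows "Omega n f (\<lambda>i. cnj (s i)) = hform n J f (cmatvec (n+2) J s)"
  unfolding hform_def cnj_cmatvec by (rule Omega_cong) (simp_all add: Jspace_involution[OF J])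

definition abs_entry_sum :: "nat \<Rightarrow> rmat \<Rightarrow> real" where
  "abs_entry_sum N A = (\<Sum>i<N. \<Sum>j<N. \<bar>A i j\<bar>)"

definition sqnorm :: "nat \<Rightarrow> cvec \<Rightarrow> real" where
  "sqnorm N v = (\<Sum>i<N. (cmod (v i))^2)"

lemma sqnorm_nonneg: "sqnorm N v \<ge> 0"
  unfolding sqnorm_def by (simp add: sum_nonneg)

lemma abs_entry_sum_nonneg: "abs_entry_sum N A \<ge> 0"
  unfolding abs_entry_sum_def by (simp add: sum_nonneg)

lemma sqnorm_cnj: "sqnorm N (\<lambda>i. cnj (v i)) = sqnorm N v"
  unfolding sqnorm_def by simp

lemma Omega_cmatvec_bound:
  "cmod (Omega n v (cmatvec (n+2) A w)) \<le> abs_entry_sum (n+2) A * ((sqnorm (n+2) v + sqnorm (n+2) w) / 2)"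
proof -
  let ?N = "n+2" and ?m = "(sqnorm (n+2) v + sqnorm (n+2) w) / 2"
  have "Omega n v (cmatvec ?N A w) = (\<Sum>i<?N. \<Sum>j<?N. of_real (Imat n i i * A i j) * (v i * w j))"
    unfolding Omega_def cmatvec_def by (auto simp: sum_distrib_left mult_ac intro!: sum.cong)
  hence "cmod (Omega n v (cmatvec ?N A w)) \<le> (\<Sum>i<?N. \<Sum>j<?N. cmod (of_real (Imat n i i * A i j) * (v i * w j)))"
    using order_trans[OF norm_sum sum_mono[OF norm_sum]] by simp
  also have "\<dots> \<le> (\<Sum>i<?N. \<Sum>j<?N. \<bar>A i j\<bar> * ?m)"
  proof (intro sum_mono)
    fix i j assume i: "i \<in> {..<?N}" and j: "j \<in> {..<?N}"
    have "cmod (v i) * cmod (w j) \<le> ((cmod (v i))^2 + (cmod (w j))^2) / 2"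
      using sum_squares_bound[of "cmod (v i)" "cmod (w j)"] by simp
    also have "\<dots> \<le> ?m"
      using member_le_sum[of i "{..<?N}" "\<lambda>i. (cmod (v i))^2"]
        member_le_sum[of j "{..<?N}" "\<lambda>i. (cmod (w i))^2"] i j
      by (simp add: sqnorm_def)
    finally have vw: "cmod (v i) * cmod (w j) \<le> ?m" .
    have "\<bar>Imat n i i\<bar> \<le> 1" by (simp add: Imat_def)
    then have "cmod (of_real (Imat n i i * A i j) * (v i * w j)) \<le> \<bar>A i j\<bar> * (cmod (v i) * cmod (w j))"
      using mult_right_mono[of "\<bar>Imat n i i\<bar>" 1 "\<bar>A i j\<bar> * (cmod (v i) * cmod (w j))"]
      by (simp add: norm_mult abs_mult mult.assoc)
    also have "\<dots> \<le> \<bar>A i j\<bar> * ?m" by (intro mult_left_mono vw) simp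
    finally show "cmod (of_real (Imat n i i * A i j) * (v i * w j)) \<le> \<bar>A i j\<bar> * ?m" .
  qed
  also have "\<dots> = abs_entry_sum ?N A * ?m"
    unfolding abs_entry_sum_def by (simp add: sum_distrib_right)
  finally show ?thesis .
qed

lemma sqnorm_le_hform:
  assumes J: "J \<in> Jspace n"
  shows "sqnorm (n+2) v \<le> abs_entry_sum (n+2) J * Re (hform n J v v)"
proof -
  let ?N = "n+2"
  define Iv where "Iv = cmatvec ?N (Imat n) v"
  have Iv_in: "Iv i = of_real (Imat n i i) * v i" if "i < ?N" for i
    using that by (simp add: Iv_def cmatvec_in sum_of_real_Imat_row)
  have Imat_sq: "Imat n i i * Imat n i i = 1" if "i < ?N" for i
    using that by (simp add: Imat_def)
  have diag_term: "of_real (Imat n i i) * v i * cnj (Iv i) = of_real ((cmod (v i))^2)" if i: "i < ?N" for i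
  proof -
    have "of_real (Imat n i i) * v i * cnj (Iv i) = of_real (Imat n i i * Imat n i i) * (v i * cnj (v i))"
      using i by (simp add: Iv_in mult_ac)
    also have "\<dots> = v i * cnj (v i)" using Imat_sq[OF i] by simp
    finally show ?thesis by (simp only: complex_norm_square)
  qed
  have "hform n J v (cmatvec ?N J Iv) = Omega n v (\<lambda>i. cnj (Iv i))"
    unfolding hform_def cnj_cmatvec by (rule Omega_cong) (simp_all add: Jspace_involution[OF J])
  also have "\<dots> = of_real (sqnorm ?N v)"
    unfolding Omega_def sqnorm_def of_real_sum by (intro sum.cong refl) (simp add: diag_term)
  finally have vw: "hform n J v (cmatvec ?N J Iv) = of_real (sqnorm ?N v)" .
  have Iv_sqnorm: "sqnorm ?N Iv = sqnorm ?N v"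
    unfolding sqnorm_def by (intro sum.cong refl) (simp add: Iv_in norm_mult Imat_def)
  have "Re (hform n J (cmatvec ?N J Iv) (cmatvec ?N J Iv)) = Re (hform n J Iv Iv)"
    by (simp only: hform_cmatvec_Jspace[OF J])
  also have "\<dots> \<le> cmod (hform n J Iv Iv)" by (rule complex_Re_le_cmod)
  also have "\<dots> \<le> abs_entry_sum ?N J * ((sqnorm ?N Iv + sqnorm ?N Iv) / 2)"
    using Omega_cmatvec_bound[of n Iv J "\<lambda>i. cnj (Iv i)"] unfolding hform_def sqnorm_cnj .
  also have "\<dots> = abs_entry_sum ?N J * sqnorm ?N v" by (simp add: Iv_sqnorm)
  finally have Iw: "Re (hform n J (cmatvec ?N J Iv) (cmatvec ?N J Iv)) \<le> abs_entry_sum ?N J * sqnorm ?N v" .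
  have "(sqnorm ?N v)^2 = (cmod (hform n J v (cmatvec ?N J Iv)))^2" by (simp add: vw)
  also have "\<dots> \<le> Re (hform n J v v) * Re (hform n J (cmatvec ?N J Iv) (cmatvec ?N J Iv))"
    by (rule hform_Cauchy_Schwarz[OF J])
  also have "\<dots> \<le> Re (hform n J v v) * (abs_entry_sum ?N J * sqnorm ?N v)"
    using Iw hform_self_nonneg[OF J, of v] by (rule mult_left_mono)
  finally have "(sqnorm ?N v)^2 \<le> Re (hform n J v v) * (abs_entry_sum ?N J * sqnorm ?N v)" .
  then have "sqnorm ?N v * sqnorm ?N v \<le> (abs_entry_sum ?N J * Re (hform n J v v)) * sqnorm ?N v"
    by (simp add: power2_eq_square mult_ac)
  then show ?thesis
    using hform_self_nonneg[OF J, of v] abs_entry_sum_nonneg[of ?N J] sqnorm_nonneg[of ?N v]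
    by (cases "sqnorm ?N v = 0") (simp_all add: mult_le_cancel_right)
qed

section \<open>Symmetry of the spectrum\<close>

lemma smooth_fun_cnj:
  fixes f :: "real \<Rightarrow> complex"
  assumes "smooth_fun f"
  shows "smooth_fun (\<lambda>x. cnj (f x))"
proof -
  from assms obtain D where D: "D 0 = f" "\<And>k x. (D k has_vector_derivative D (Suc k) x) (at x)"
    unfolding smooth_fun_def by blast
  show ?thesis unfolding smooth_fun_def
    by (rule exI[of _ "\<lambda>k x. cnj (D k x)"])
       (auto simp: D(1)[symmetric] intro!: has_vector_derivative_cnj D(2))
qed

lemma smooth_fun_differentiable:
  assumes "smooth_fun f"
  shows "f differentiable at x"
proof -
  from assms obtain D where D: "D 0 = f" "\<And>k x. (D k has_vector_derivative D (Suc k) x) (at x)"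
    unfolding smooth_fun_def by blast
  show ?thesis using D(2)[of 0 x] unfolding D(1) differentiable_def has_vector_derivative_def by blast
qed

lemma bsection_cnj: "bsection n c L g s \<Longrightarrow> bsection n c L g (\<lambda>k x i. cnj (s k x i))"
  unfolding bsection_def by (auto intro!: smooth_fun_cnj simp: cnj_cmatvec[symmetric, THEN fun_cong])

lemma eigensection_cnj:
  assumes e: "eigensection n c L g Jb lam s"
  shows "eigensection n c L g Jb (-lam) (\<lambda>k x i. cnj (s k x i))"
  unfolding eigensection_def
proof (intro conjI allI impI)
  show "bsection n c L g (\<lambda>k x i. cnj (s k x i))"
    using e by (intro bsection_cnj) (simp add: eigensection_def)
  fix k x i assume k: "k < c" and i: "i < n+2"
  have "smooth_fun (\<lambda>x. s k x j)" for j using e k by (simp add: eigensection_def bsection_def)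
  then have vd: "vector_derivative (\<lambda>t. cnj (s k t j)) (at x) = cnj (vector_derivative (\<lambda>t. s k t j) (at x))" for j
    by (intro vector_derivative_cnj smooth_fun_differentiable)
  have "\<i> * (\<Sum>j<n+2. complex_of_real (Jb k x i j) * vector_derivative (\<lambda>t. s k t j) (at x))
        = complex_of_real lam * s k x i" using e k i by (simp add: eigensection_def)
  then have "cnj (\<i> * (\<Sum>j<n+2. complex_of_real (Jb k x i j) * vector_derivative (\<lambda>t. s k t j) (at x)))
        = cnj (complex_of_real lam * s k x i)" by simp
  then have "- \<i> * (\<Sum>j<n+2. complex_of_real (Jb k x i j) * cnj (vector_derivative (\<lambda>t. s k t j) (at x)))
        = complex_of_real lam * cnj (s k x i)" by simp
  then have "\<i> * (\<Sum>j<n+2. complex_of_real (Jb k x i j) * cnj (vector_derivative (\<lambda>t. s k t j) (at x)))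
        = complex_of_real (-lam) * cnj (s k x i)"
    by (metis minus_mult_left minus_equation_iff of_real_minus)
  then show "\<i> * (\<Sum>j<n+2. complex_of_real (Jb k x i j) * vector_derivative (\<lambda>t. cnj (s k t j)) (at x))
        = complex_of_real (-lam) * cnj (s k x i)" by (simp add: vd)
qed

lemma lin_indep_sections_cnj:
  assumes "lin_indep_sections m S"
  shows "lin_indep_sections m (\<lambda>j k x i. cnj (S j k x i))"
  unfolding lin_indep_sections_def
proof (rule allI, rule impI)
  fix a :: "nat \<Rightarrow> complex"
  assume "\<forall>k x i. (\<Sum>j<m. a j * cnj (S j k x i)) = 0"
  then have "\<forall>k x i. (\<Sum>j<m. cnj (a j) * S j k x i) = 0"
    by (metis (no_types, lifting) cnj_sum complex_cnj_cnj complex_cnj_mult complex_cnj_zero_iff sum.cong)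
  then have "\<forall>j<m. cnj (a j) = 0"
    using spec[OF assms[unfolded lin_indep_sections_def], of "\<lambda>j. cnj (a j)"] by blast
  then show "\<forall>j<m. a j = 0" by simp
qed

lemma eig_mult_uminus: "eig_mult n c L g Jb (-lam) = eig_mult n c L g Jb lam"
proof -
  have sub: "{m. \<exists>S. (\<forall>j<m. eigensection n c L g Jb mu (S j)) \<and> lin_indep_sections m S}
     \<subseteq> {m. \<exists>S. (\<forall>j<m. eigensection n c L g Jb (-mu) (S j)) \<and> lin_indep_sections m S}" for mu
  proof (intro subsetI CollectI, elim CollectE exE conjE)
    fix m S
    assume "\<forall>j<m. eigensection n c L g Jb mu (S j)" "lin_indep_sections m S"
    then show "\<exists>S. (\<forall>j<m. eigensection n c L g Jb (-mu) (S j)) \<and> lin_indep_sections m S"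
      by (intro exI[of _ "\<lambda>j k x i. cnj (S j k x i)"]) (simp add: eigensection_cnj lin_indep_sections_cnj)
  qed
  show ?thesis unfolding eig_mult_def using sub[of lam] sub[of "-lam"] by simp
qed

section \<open>The energy estimate\<close>

lemma smooth_fun_continuous_on: "smooth_fun f \<Longrightarrow> continuous_on S f"
  by (intro continuous_at_imp_continuous_on ballI differentiable_imp_continuous_within
      smooth_fun_differentiable)

lemma smooth_fun_vector_derivative:
  assumes "smooth_fun f"
  shows "(f has_vector_derivative vector_derivative f (at x)) (at x)"
    and "continuous_on S (\<lambda>x. vector_derivative f (at x))"
proof -
  from assms obtain D where D: "D 0 = f" "\<And>k x. (D k has_vector_derivative D (Suc k) x) (at x)"
    unfolding smooth_fun_def by blast
  have Df: "vector_derivative f (at x) = D 1 x" for x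
    using D(2)[of 0 x] by (simp add: D(1) vector_derivative_at)
  show "(f has_vector_derivative vector_derivative f (at x)) (at x)"
    using D(2)[of 0 x] by (simp add: D(1) Df)
  show "continuous_on S (\<lambda>x. vector_derivative f (at x))"
    unfolding Df
    by (intro continuous_at_imp_continuous_on ballI) (rule has_vector_derivative_continuous[OF D(2)])
qed

lemma hform_has_vector_derivative:
  assumes "\<And>i j. ((\<lambda>t. J t i j) has_real_derivative Jd i j) (at x within S)"
    and "\<And>i. ((\<lambda>t. u t i) has_vector_derivative ud i) (at x within S)"
    and "\<And>i. ((\<lambda>t. w t i) has_vector_derivative wd i) (at x within S)"
  shows "((\<lambda>t. hform n (J t) (u t) (w t)) has_vector_derivative
     (hform n (J x) ud (w x) + Omega n (u x) (cmatvec (n+2) Jd (\<lambda>i. cnj (w x i))) + hform n (J x) (u x) wd))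
     (at x within S)"
proof -
  let ?N = "n+2"
  have "((\<lambda>t. \<Sum>i<?N. of_real (Imat n i i) * u t i * (\<Sum>j<?N. of_real (J t i j) * cnj (w t j))) has_vector_derivative
     (\<Sum>i<?N. of_real (Imat n i i) * u x i * (\<Sum>j<?N. of_real (J x i j) * cnj (wd j) + of_real (Jd i j) * cnj (w x j))
        + of_real (Imat n i i) * ud i * (\<Sum>j<?N. of_real (J x i j) * cnj (w x j)))) (at x within S)"
    by (intro has_vector_derivative_sum has_vector_derivative_mult has_vector_derivative_mult_right
        has_vector_derivative_of_real has_vector_derivative_cnj assms)
  moreover have "(\<Sum>i<?N. of_real (Imat n i i) * u x i * (\<Sum>j<?N. of_real (J x i j) * cnj (wd j) + of_real (Jd i j) * cnj (w x j))
        + of_real (Imat n i i) * ud i * (\<Sum>j<?N. of_real (J x i j) * cnj (w x j)))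
     = hform n (J x) ud (w x) + Omega n (u x) (cmatvec (n+2) Jd (\<lambda>i. cnj (w x i))) + hform n (J x) (u x) wd"
    unfolding hform_expand Omega_def by (simp add: cmatvec_in sum.distrib algebra_simps)
  ultimately show ?thesis unfolding hform_expand by simp
qed

text \<open>For \<open>u' = -i J (a u + f)\<close> the contribution of \<open>a\<close> to the derivative of the energy is
  purely imaginary; the \<open>f\<close>-term is estimated by Cauchy--Schwarz.\<close>
lemma energy_derivative_bound:
  assumes J: "J \<in> Jspace n"
    and ud: "\<And>i. i < n+2 \<Longrightarrow> ud i = - \<i> * cmatvec (n+2) J (\<lambda>l. of_real a * u l + f l) i"
  shows "Re (hform n J ud u + Omega n u (cmatvec (n+2) Jd (\<lambda>i. cnj (u i))) + hform n J u ud)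
     \<le> (1 + abs_entry_sum (n+2) Jd * abs_entry_sum (n+2) J) * Re (hform n J u u) + Re (hform n J f f)"
proof -
  let ?N = "n+2"
  define z where "z = Omega n f (\<lambda>i. cnj (u i))"
  define e where "e = Re (hform n J u u)"
  define \<phi> where "\<phi> = Re (hform n J f f)"
  have e0: "e \<ge> 0" "\<phi> \<ge> 0" unfolding e_def \<phi>_def by (simp_all add: hform_self_nonneg[OF J])
  define w where "w = (\<lambda>l. of_real a * u l + f l)"
  have "hform n J ud u = hform n J (\<lambda>i. - \<i> * cmatvec ?N J w i) u"
    by (rule hform_cong) (simp_all add: ud w_def)
  also have "\<dots> = - \<i> * hform n J (cmatvec ?N J w) u" by (rule hform_scale_left)
  also have "hform n J (cmatvec ?N J w) u = Omega n w (\<lambda>i. cnj (u i))"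
    unfolding hform_def using J Jspace_subset_O_n2 by (intro Omega_O_n2_invariant) auto
  also have "\<dots> = of_real a * Omega n u (\<lambda>i. cnj (u i)) + z"
    unfolding w_def z_def Omega_add_left Omega_scale_left ..
  finally have "Re (hform n J ud u) = Im z" using Omega_cnj_self_real[of n u] by simp
  moreover have "hform n J u ud = cnj (hform n J ud u)" using cnj_hform[OF J, of ud u] by simp
  ultimately have r1: "Re (hform n J ud u + hform n J u ud) = 2 * Im z" by simp
  have "z = hform n J f (cmatvec ?N J u)" unfolding z_def by (rule Omega_cnj_eq_hform[OF J])
  hence "(cmod z)^2 \<le> \<phi> * e"
    using hform_Cauchy_Schwarz[OF J, of f "cmatvec ?N J u"] by (simp add: hform_cmatvec_Jspace[OF J] \<phi>_def e_def)
  hence "cmod z \<le> (\<phi> + e) / 2"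
    using real_le_rsqrt arith_geo_mean_sqrt[OF e0(2,1)] by (meson order_trans)
  hence "2 * cmod z \<le> \<phi> + e" by simp
  hence r2: "2 * Im z \<le> \<phi> + e" using abs_Im_le_cmod[of z] by linarith
  have "Re (Omega n u (cmatvec ?N Jd (\<lambda>i. cnj (u i)))) \<le> abs_entry_sum ?N Jd * sqnorm ?N u"
    using complex_Re_le_cmod Omega_cmatvec_bound[of n u Jd "\<lambda>i. cnj (u i)"]
    by (simp add: sqnorm_cnj) (meson order_trans)
  also have "\<dots> \<le> abs_entry_sum ?N Jd * (abs_entry_sum ?N J * e)"
    unfolding e_def by (intro mult_left_mono sqnorm_le_hform[OF J] abs_entry_sum_nonneg)
  finally show ?thesis using r1 r2 unfolding e_def[symmetric] \<phi>_def[symmetric]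
    by (simp add: algebra_simps)
qed

lemma Gronwall_integral_bound:
  fixes e \<phi> :: "real \<Rightarrow> real"
  assumes de: "\<And>t. (e has_real_derivative e' t) (at t)"
    and bnd: "\<And>t. t \<in> {0..T} \<Longrightarrow> e' t \<le> C * e t + \<phi> t"
    and e0: "e 0 = 0" and C: "C \<ge> 0"
    and \<phi>: "continuous_on {0..T} \<phi>" "\<And>t. t \<in> {0..T} \<Longrightarrow> \<phi> t \<ge> 0"
    and x: "x \<in> {0..T}"
  shows "e x \<le> exp (C * T) * integral {0..T} \<phi>"
proof -
  define h where "h = (\<lambda>t. exp (- C * t) * e t)"
  define h' where "h' = (\<lambda>t. exp (- C * t) * (e' t - C * e t))"
  have dh: "(h has_real_derivative h' t) (at t)" for t
    unfolding h_def h'_def by (rule derivative_eq_intros refl de | simp add: algebra_simps)+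
  have h'le: "h' t \<le> \<phi> t" if t: "t \<in> {0..T}" for t
  proof -
    have "h' t \<le> exp (- C * t) * \<phi> t" unfolding h'_def using bnd[OF t] by (intro mult_left_mono) auto
    also have "\<dots> \<le> 1 * \<phi> t" using C t \<phi>(2)[OF t] by (intro mult_right_mono) auto
    finally show ?thesis by simp
  qed
  have x0T: "{0..x} \<subseteq> {0..T}" using x by auto
  have "(h' has_integral (h x - h 0)) {0..x}"
    using x by (intro fundamental_theorem_of_calculus)
      (auto intro!: has_field_derivative_at_within dh simp flip: has_real_derivative_iff_has_vector_derivative)
  moreover have "(\<phi> has_integral integral {0..x} \<phi>) {0..x}"
    by (intro integrable_integral integrable_continuous_interval continuous_on_subset[OF \<phi>(1) x0T])
  ultimately have "h x - h 0 \<le> integral {0..x} \<phi>"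
    by (rule has_integral_le) (use h'le x0T in auto)
  also have "\<dots> \<le> integral {0..T} \<phi>"
    using \<phi> x0T by (intro integral_subset_le integrable_continuous_interval continuous_on_subset[OF \<phi>(1)]) auto
  finally have hx: "h x \<le> integral {0..T} \<phi>" by (simp add: h_def e0)
  have I0: "integral {0..T} \<phi> \<ge> 0"
    using \<phi> by (intro Henstock_Kurzweil_Integration.integral_nonneg integrable_continuous_interval) auto
  have "e x = exp (C * x) * h x" unfolding h_def by (simp add: exp_minus field_simps)
  also have "\<dots> \<le> exp (C * x) * integral {0..T} \<phi>" using hx by (intro mult_left_mono) auto
  also have "\<dots> \<le> exp (C * T) * integral {0..T} \<phi>" using I0 x C
    by (intro mult_right_mono) (auto intro: mult_left_mono)
  finally show ?thesis .
qed

lemma energy_estimate: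
  fixes J :: "real \<Rightarrow> rmat"
  assumes Jsp: "\<And>x. J x \<in> Jspace n" and Jsm: "\<And>i j. smooth_fun (\<lambda>x. J x i j)"
  obtains E where "E \<ge> 0"
    and "\<And>a u ud f x. (\<And>x i. ((\<lambda>t. u t i) has_vector_derivative ud x i) (at x)) \<Longrightarrow>
      (\<And>x i. i < n+2 \<Longrightarrow> ud x i = - \<i> * cmatvec (n+2) (J x) (\<lambda>l. of_real a * u x l + f x l) i) \<Longrightarrow>
      (\<And>i. continuous_on {0..T} (\<lambda>x. f x i)) \<Longrightarrow> (\<And>i. i < n+2 \<Longrightarrow> u 0 i = 0) \<Longrightarrow> x \<in> {0..T} \<Longrightarrow>
      Re (hform n (J x) (u x) (u x)) \<le> E * integral {0..T} (\<lambda>x. Re (hform n (J x) (f x) (f x)))"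
proof -
  let ?N = "n+2"
  define Jd where "Jd = (\<lambda>x i j. vector_derivative (\<lambda>t. J t i j) (at x))"
  have Jd: "((\<lambda>t. J t i j) has_real_derivative Jd x i j) (at x)" for i j x
    using smooth_fun_vector_derivative(1)[OF Jsm]
    by (simp add: Jd_def has_real_derivative_iff_has_vector_derivative)
  have cJ: "continuous_on {0..T} (\<lambda>x. J x i j)" for i j by (rule smooth_fun_continuous_on[OF Jsm])
  have cJd: "continuous_on {0..T} (\<lambda>x. Jd x i j)" for i j
    unfolding Jd_def by (rule smooth_fun_vector_derivative(2)[OF Jsm])
  have "continuous_on {0..T} (\<lambda>x. abs_entry_sum ?N (J x))"
    unfolding abs_entry_sum_def by (intro continuous_intros cJ)
  then obtain M0 where M0: "M0 \<ge> 0" "\<And>x. x \<in> {0..T} \<Longrightarrow> norm (abs_entry_sum ?N (J x)) \<le> M0"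
    using continuous_on_compact_bound[OF compact_Icc] by blast
  have "continuous_on {0..T} (\<lambda>x. abs_entry_sum ?N (Jd x))"
    unfolding abs_entry_sum_def by (intro continuous_intros cJd)
  then obtain M1 where M1: "M1 \<ge> 0" "\<And>x. x \<in> {0..T} \<Longrightarrow> norm (abs_entry_sum ?N (Jd x)) \<le> M1"
    using continuous_on_compact_bound[OF compact_Icc] by blast
  define C where "C = 1 + M1 * M0"
  show ?thesis
  proof (rule that[of "exp (C * T)"])
    fix a u ud f x
    assume du: "\<And>x i. ((\<lambda>t. u t i) has_vector_derivative ud x i) (at x)"
      and ode: "\<And>x i. i < n+2 \<Longrightarrow> ud x i = - \<i> * cmatvec (n+2) (J x) (\<lambda>l. of_real a * u x l + f x l) i"
      and cf: "\<And>i. continuous_on {0..T} (\<lambda>x. f x i)"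
      and u0: "\<And>i. i < n+2 \<Longrightarrow> u 0 i = 0"
      and x: "x \<in> {0..T}"
    define Q' where "Q' = (\<lambda>t. hform n (J t) (ud t) (u t)
       + Omega n (u t) (cmatvec ?N (Jd t) (\<lambda>i. cnj (u t i))) + hform n (J t) (u t) (ud t))"
    show "Re (hform n (J x) (u x) (u x)) \<le> exp (C * T) * integral {0..T} (\<lambda>x. Re (hform n (J x) (f x) (f x)))"
    proof (rule Gronwall_integral_bound[where e="\<lambda>t. Re (hform n (J t) (u t) (u t))"
          and e'="\<lambda>t. Re (Q' t)" and \<phi>="\<lambda>t. Re (hform n (J t) (f t) (f t))"])
      fix t
      have "((\<lambda>t. hform n (J t) (u t) (u t)) has_vector_derivative Q' t) (at t)"
        unfolding Q'_def by (rule hform_has_vector_derivative) (use Jd du in auto)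
      from bounded_linear.has_vector_derivative[OF bounded_linear_Re this]
      show "((\<lambda>x. Re (hform n (J x) (u x) (u x))) has_real_derivative Re (Q' t)) (at t)"
        by (simp add: has_real_derivative_iff_has_vector_derivative)
    next
      fix t assume t: "t \<in> {0..T}"
      have "Re (Q' t) \<le> (1 + abs_entry_sum ?N (Jd t) * abs_entry_sum ?N (J t)) * Re (hform n (J t) (u t) (u t))
          + Re (hform n (J t) (f t) (f t))"
        unfolding Q'_def by (rule energy_derivative_bound[OF Jsp ode])
      also have "(1 + abs_entry_sum ?N (Jd t) * abs_entry_sum ?N (J t)) * Re (hform n (J t) (u t) (u t))
          \<le> C * Re (hform n (J t) (u t) (u t))"
        unfolding C_def using M0(2)[OF t] M1(2)[OF t] M1(1)
          abs_entry_sum_nonneg[of ?N "J t"] abs_entry_sum_nonneg[of ?N "Jd t"] hform_self_nonneg[OF Jsp]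
        by (intro mult_right_mono add_left_mono mult_mono) auto
      finally show "Re (Q' t) \<le> C * Re (hform n (J t) (u t) (u t)) + Re (hform n (J t) (f t) (f t))"
        by simp
    next
      show "continuous_on {0..T} (\<lambda>t. Re (hform n (J t) (f t) (f t)))"
        unfolding hform_expand by (intro continuous_intros cJ cf)
    qed (use u0 x hform_self_nonneg[OF Jsp] in \<open>auto simp: hform_zero_left C_def M0(1) M1(1)\<close>)
  qed simp
qed

section \<open>Eigenfunctions on one boundary circle\<close>

text \<open>
  The restriction of an eigensection to the lift of the \<open>k\<close>-th boundary circle, where
  \<open>G\<close> is the holonomy and \<open>L\<close> the length of the circle.
\<close>
definition circle_eigenfun :: "nat \<Rightarrow> rmat \<Rightarrow> (real \<Rightarrow> rmat) \<Rightarrow> real \<Rightarrow> real \<Rightarrow> (real \<Rightarrow> cvec) \<Rightarrow> bool" where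
  "circle_eigenfun n G J L lam v \<longleftrightarrow>
     (\<forall>i x. (\<lambda>t. v t i) differentiable at x) \<and> (\<forall>x i. n+2 \<le> i \<longrightarrow> v x i = 0) \<and>
     (\<forall>x. v (x + L) = cmatvec (n+2) G (v x)) \<and>
     (\<forall>x. \<forall>i<n+2. \<i> * (\<Sum>j<n+2. of_real (J x i j) * vector_derivative (\<lambda>t. v t j) (at x)) = of_real lam * v x i)"

lemma circle_eigenfun_has_vector_derivative:
  assumes e: "circle_eigenfun n G J L lam v" and Jsp: "J x \<in> Jspace n"
  shows "((\<lambda>t. v t i) has_vector_derivative (- \<i> * of_real lam * cmatvec (n+2) (J x) (v x) i)) (at x)"
proof -
  define y where "y = (\<lambda>j. vector_derivative (\<lambda>t. v t j) (at x))"
  have y: "((\<lambda>t. v t j) has_vector_derivative y j) (at x)" for j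
    using e unfolding circle_eigenfun_def y_def by (simp add: vector_derivative_works)
  have "y i = - \<i> * of_real lam * cmatvec (n+2) (J x) (v x) i"
  proof (cases "i < n+2")
    case True
    have Jy: "cmatvec (n+2) (J x) y l = (- \<i> * of_real lam) * v x l" if l: "l < n+2" for l
    proof -
      have "\<i> * cmatvec (n+2) (J x) y l = of_real lam * v x l"
        using e l unfolding circle_eigenfun_def y_def by (simp add: cmatvec_in)
      then have "- \<i> * (\<i> * cmatvec (n+2) (J x) y l) = - \<i> * (of_real lam * v x l)" by simp
      then show ?thesis by (simp add: algebra_simps)
    qed
    have "y i = cmatvec (n+2) (J x) (cmatvec (n+2) (J x) y) i"
      using Jspace_involution[OF Jsp True] by simp
    also have "\<dots> = cmatvec (n+2) (J x) (\<lambda>l. (- \<i> * of_real lam) * v x l) i"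
      by (simp only: cmatvec_cong[of "n+2" _ _ "J x", OF Jy])
    also have "\<dots> = (- \<i> * of_real lam) * cmatvec (n+2) (J x) (v x) i"
      by (simp only: cmatvec_scale)
    finally show ?thesis .
  next
    case False
    then have "(\<lambda>t. v t i) = (\<lambda>t. 0)" using e unfolding circle_eigenfun_def by auto
    then show ?thesis using False y[of i] by (simp add: cmatvec_def y_def)
  qed
  then show ?thesis using y[of i] by simp
qed

lemma circle_eigenfun_continuous_on: "circle_eigenfun n G J L lam v \<Longrightarrow> continuous_on S (\<lambda>t. v t i)"
  unfolding circle_eigenfun_def
  by (intro continuous_at_imp_continuous_on ballI) (simp add: differentiable_imp_continuous_within)

lemma circle_eigenfun_lincomb:
  assumes P: "finite P" and e: "\<And>p. p \<in> P \<Longrightarrow> circle_eigenfun n G J L lam (S p)"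
  shows "circle_eigenfun n G J L lam (\<lambda>x i. \<Sum>p\<in>P. cf p * S p x i)"
proof -
  let ?N = "n+2"
  have "(\<lambda>t. S p t i) differentiable at x" if "p \<in> P" for p i x
    using e[OF that] unfolding circle_eigenfun_def by blast
  then have hd: "((\<lambda>t. \<Sum>p\<in>P. cf p * S p t i) has_vector_derivative
      (\<Sum>p\<in>P. cf p * vector_derivative (\<lambda>t. S p t i) (at x))) (at x)" for i x
    by (intro has_vector_derivative_sum has_vector_derivative_mult_right)
       (simp add: vector_derivative_works[symmetric])
  have vd: "vector_derivative (\<lambda>t. \<Sum>p\<in>P. cf p * S p t i) (at x) =
      (\<Sum>p\<in>P. cf p * vector_derivative (\<lambda>t. S p t i) (at x))" for i x
    using hd by (rule vector_derivative_at)
  show ?thesis unfolding circle_eigenfun_def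
  proof (intro conjI allI impI)
    fix i x show "(\<lambda>t. \<Sum>p\<in>P. cf p * S p t i) differentiable at x"
      using hd[of i x] unfolding differentiable_def has_vector_derivative_def by blast
  next
    fix x i assume "n+2 \<le> i" then show "(\<Sum>p\<in>P. cf p * S p x i) = 0"
      using e unfolding circle_eigenfun_def by simp
  next
    fix x
    have "S p (x + L) = cmatvec ?N G (S p x)" if "p \<in> P" for p
      using e[OF that] unfolding circle_eigenfun_def by blast
    then show "(\<lambda>i. \<Sum>p\<in>P. cf p * S p (x + L) i) = cmatvec ?N G (\<lambda>i. \<Sum>p\<in>P. cf p * S p x i)"
      by (simp add: cmatvec_sum cmatvec_scale)
  next
    fix x i assume i: "i < n+2"
    have "\<i> * (\<Sum>j<?N. of_real (J x i j) * vector_derivative (\<lambda>t. \<Sum>p\<in>P. cf p * S p t j) (at x))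
        = (\<Sum>p\<in>P. cf p * (\<i> * (\<Sum>j<?N. of_real (J x i j) * vector_derivative (\<lambda>t. S p t j) (at x))))"
      unfolding vd by (simp add: sum_distrib_left sum_distrib_right mult_ac sum.swap[of _ P])
    also have "\<dots> = (\<Sum>p\<in>P. cf p * (of_real lam * S p x i))"
      using e i unfolding circle_eigenfun_def by (intro sum.cong) auto
    finally show "\<i> * (\<Sum>j<?N. of_real (J x i j) * vector_derivative (\<lambda>t. \<Sum>p\<in>P. cf p * S p t j) (at x))
        = of_real lam * (\<Sum>p\<in>P. cf p * S p x i)"
      by (simp add: sum_distrib_left mult_ac)
  qed
qed

lemma periodic_property_extend:
  fixes L :: real
  assumes L: "L > 0" and base: "\<And>y. y \<in> {0..L} \<Longrightarrow> P y"
    and fw: "\<And>x. P x \<Longrightarrow> P (x + L)" and bw: "\<And>x. P (x + L) \<Longrightarrow> P x"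
  shows "P x"
proof -
  have fw_iter: "P (y + real k * L)" if "y \<in> {0..L}" for y k
    by (induction k) (use base that fw[of "y + real k * L" for k] in \<open>auto simp: algebra_simps\<close>)
  have bw_iter: "P (y - real k * L)" if "y \<in> {0..L}" for y k
    by (induction k) (use base that bw[of "y - real (Suc k) * L" for k] in \<open>auto simp: algebra_simps\<close>)
  show ?thesis
  proof (cases "x \<ge> 0")
    case True
    define k where "k = nat \<lfloor>x / L\<rfloor>"
    have "real k \<le> x / L" "x / L < real k + 1"
      using True L floor_correct[of "x/L"] unfolding k_def by auto
    then have "x - real k * L \<in> {0..L}" using L by (auto simp: field_simps)
    from fw_iter[OF this, of k] show ?thesis by simp
  next
    case False
    define k where "k = nat \<lceil>- x / L\<rceil>"
    have "- x / L \<le> real k" "real k < - x / L + 1"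
      using False L ceiling_correct[of "- x/L"] unfolding k_def by auto
    then have "x + real k * L \<in> {0..L}" using L by (auto simp: field_simps)
    from bw_iter[OF this, of k] show ?thesis by simp
  qed
qed

lemma circle_eigenfun_eq_0:
  assumes e: "circle_eigenfun n G J L lam v" and G: "G \<in> O_n2 n" and L: "L > 0"
    and z: "\<And>x i. x \<in> {0..L} \<Longrightarrow> i < n+2 \<Longrightarrow> v x i = 0"
  shows "v x i = 0"
proof -
  have sup: "\<And>x i. n+2 \<le> i \<Longrightarrow> v x i = 0" and per: "\<And>x. v (x + L) = cmatvec (n+2) G (v x)"
    using e unfolding circle_eigenfun_def by auto
  have "\<forall>i. v x i = 0"
  proof (rule periodic_property_extend[OF L])
    show "\<forall>i. v y i = 0" if "y \<in> {0..L}" for y using z[OF that] sup by (metis not_less)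
    show "\<forall>i. v (y + L) i = 0" if "\<forall>i. v y i = 0" for y
      using that per[of y] by (simp add: cmatvec_def)
    show "\<forall>i. v y i = 0" if "\<forall>i. v (y + L) i = 0" for y
      using that per[of y] sup O_n2_cmatvec_eq_0D[OF G] by (metis not_less)
  qed
  then show ?thesis by simp
qed

text \<open>\<open>i J d/dx\<close> is formally self-adjoint for \<open>\<Omega>(v, J conj w)\<close>, and the boundary
  terms cancel because the holonomy preserves \<open>\<Omega>\<close>.\<close>
lemma circle_eigenfuns_orthogonal:
  assumes ev: "circle_eigenfun n G J L lam v" and ew: "circle_eigenfun n G J L mu w"
    and G: "G \<in> O_n2 n" and Jsp: "\<And>x. J x \<in> Jspace n" and L: "L \<ge> 0" and ne: "lam \<noteq> mu"
  shows "((\<lambda>x. hform n (J x) (v x) (w x)) has_integral 0) {0..L}"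
proof -
  let ?N = "n+2"
  define F where "F = (\<lambda>x. Omega n (v x) (\<lambda>i. cnj (w x i)))"
  define c where "c = - \<i> * of_real (lam - mu)"
  have dF: "(F has_vector_derivative c * hform n (J x) (v x) (w x)) (at x)" for x
  proof -
    define vd where "vd = (\<lambda>i. - \<i> * of_real lam * cmatvec ?N (J x) (v x) i)"
    define wd where "wd = (\<lambda>i. - \<i> * of_real mu * cmatvec ?N (J x) (w x) i)"
    have "((\<lambda>t. \<Sum>i<?N. of_real (Imat n i i) * v t i * cnj (w t i)) has_vector_derivative
       (\<Sum>i<?N. of_real (Imat n i i) * v x i * cnj (wd i) + of_real (Imat n i i) * vd i * cnj (w x i))) (at x)"
      unfolding vd_def wd_def
      by (intro has_vector_derivative_sum has_vector_derivative_mult has_vector_derivative_mult_right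
          has_vector_derivative_cnj circle_eigenfun_has_vector_derivative[OF ev Jsp]
          circle_eigenfun_has_vector_derivative[OF ew Jsp])
    moreover have "(\<Sum>i<?N. of_real (Imat n i i) * v x i * cnj (wd i) + of_real (Imat n i i) * vd i * cnj (w x i))
       = Omega n (v x) (\<lambda>i. cnj (wd i)) + Omega n vd (\<lambda>i. cnj (w x i))"
      unfolding Omega_def by (simp add: sum.distrib)
    moreover have "Omega n vd (\<lambda>i. cnj (w x i)) = (- \<i> * of_real lam) * hform n (J x) (v x) (w x)"
      unfolding vd_def Omega_scale_left hform_def Omega_Jspace_self_adjoint[OF Jsp] ..
    moreover have "Omega n (v x) (\<lambda>i. cnj (wd i)) = (\<i> * of_real mu) * hform n (J x) (v x) (w x)"
    proof -
      have "(\<lambda>i. cnj (wd i)) = (\<lambda>i. (\<i> * of_real mu) * cmatvec ?N (J x) (\<lambda>i. cnj (w x i)) i)"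
        unfolding wd_def by (simp add: cnj_cmatvec[symmetric, THEN fun_cong])
      then show ?thesis unfolding hform_def by (simp add: Omega_scale_right)
    qed
    ultimately show ?thesis unfolding F_def Omega_def c_def by (simp add: algebra_simps)
  qed
  have "((\<lambda>x. c * hform n (J x) (v x) (w x)) has_integral (F L - F 0)) {0..L}"
    using L by (intro fundamental_theorem_of_calculus) (auto intro: has_vector_derivative_at_within dF)
  moreover have "F L = F 0"
  proof -
    have "v L = cmatvec ?N G (v 0)" and "w L = cmatvec ?N G (w 0)"
      using ev ew unfolding circle_eigenfun_def by (metis add_0)+
    then have "F L = Omega n (cmatvec ?N G (v 0)) (cmatvec ?N G (\<lambda>i. cnj (w 0 i)))"
      unfolding F_def by (simp add: cnj_cmatvec)
    also have "\<dots> = F 0" unfolding F_def by (rule Omega_O_n2_invariant[OF G])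
    finally show ?thesis .
  qed
  moreover have "c \<noteq> 0" using ne unfolding c_def by simp
  ultimately show ?thesis by (simp add: has_integral_mult_right_iff)
qed

lemma integral_hform_circle_eigensum:
  assumes fin: "finite \<Lambda>" and eig: "\<And>lam. lam \<in> \<Lambda> \<Longrightarrow> circle_eigenfun n G J L lam (V lam)"
    and G: "G \<in> O_n2 n" and Jsp: "\<And>x. J x \<in> Jspace n"
    and cJ: "\<And>i j. continuous_on {0..L} (\<lambda>x. J x i j)" and L: "L \<ge> 0"
  shows "(\<lambda>x. Re (hform n (J x) (\<lambda>i. \<Sum>lam\<in>\<Lambda>. of_real (c lam) * V lam x i)
                                (\<lambda>i. \<Sum>lam\<in>\<Lambda>. of_real (c lam) * V lam x i))) integrable_on {0..L}"
    and "integral {0..L} (\<lambda>x. Re (hform n (J x) (\<lambda>i. \<Sum>lam\<in>\<Lambda>. of_real (c lam) * V lam x i)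
                                             (\<lambda>i. \<Sum>lam\<in>\<Lambda>. of_real (c lam) * V lam x i)))
      = (\<Sum>lam\<in>\<Lambda>. (c lam)^2 * integral {0..L} (\<lambda>x. Re (hform n (J x) (V lam x) (V lam x))))"
proof -
  define H where "H = (\<lambda>lam mu x. Re (hform n (J x) (V lam x) (V mu x)))"
  have cV: "continuous_on {0..L} (\<lambda>x. V lam x i)" if "lam \<in> \<Lambda>" for lam i
    using eig[OF that] by (rule circle_eigenfun_continuous_on)
  have iH: "H lam mu integrable_on {0..L}" if "lam \<in> \<Lambda>" "mu \<in> \<Lambda>" for lam mu
    unfolding H_def hform_expand using that
    by (intro integrable_continuous_interval continuous_intros cJ cV)
  have orth: "integral {0..L} (H lam mu) = 0" if "lam \<in> \<Lambda>" "mu \<in> \<Lambda>" "lam \<noteq> mu" for lam mu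
  proof -
    have "((\<lambda>x. hform n (J x) (V lam x) (V mu x)) has_integral 0) {0..L}"
      using eig that L G Jsp by (intro circle_eigenfuns_orthogonal) auto
    from has_integral_linear[OF this bounded_linear_Re]
    show ?thesis unfolding H_def by (simp add: o_def integral_unique)
  qed
  have pw: "Re (hform n (J x) (\<lambda>i. \<Sum>lam\<in>\<Lambda>. of_real (c lam) * V lam x i) (\<lambda>i. \<Sum>lam\<in>\<Lambda>. of_real (c lam) * V lam x i))
      = (\<Sum>lam\<in>\<Lambda>. \<Sum>mu\<in>\<Lambda>. (c lam * c mu) * H lam mu x)" for x
    unfolding H_def hform_sum_left hform_sum_right hform_scale_left hform_scale_right
    by (simp add: mult_ac)
  have iH': "(\<lambda>x. (c lam * c mu) * H lam mu x) integrable_on {0..L}" if "lam \<in> \<Lambda>" "mu \<in> \<Lambda>" for lam mu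
    using iH[OF that] by (rule integrable_on_mult_right)
  show "(\<lambda>x. Re (hform n (J x) (\<lambda>i. \<Sum>lam\<in>\<Lambda>. of_real (c lam) * V lam x i)
                                (\<lambda>i. \<Sum>lam\<in>\<Lambda>. of_real (c lam) * V lam x i))) integrable_on {0..L}"
    unfolding pw using fin iH' by (intro Henstock_Kurzweil_Integration.integrable_sum) auto
  have "integral {0..L} (\<lambda>x. \<Sum>lam\<in>\<Lambda>. \<Sum>mu\<in>\<Lambda>. (c lam * c mu) * H lam mu x)
      = (\<Sum>lam\<in>\<Lambda>. \<Sum>mu\<in>\<Lambda>. (c lam * c mu) * integral {0..L} (H lam mu))"
    using fin iH'
    by (simp add: Henstock_Kurzweil_Integration.integral_sum Henstock_Kurzweil_Integration.integrable_sum)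
  also have "\<dots> = (\<Sum>lam\<in>\<Lambda>. (c lam)^2 * integral {0..L} (H lam lam))"
  proof (rule sum.cong[OF refl])
    fix lam assume lam: "lam \<in> \<Lambda>"
    have "(\<Sum>mu\<in>\<Lambda>. (c lam * c mu) * integral {0..L} (H lam mu))
        = (\<Sum>mu\<in>\<Lambda>. if mu = lam then (c lam * c lam) * integral {0..L} (H lam lam) else 0)"
      using orth lam by (intro sum.cong) auto
    then show "(\<Sum>mu\<in>\<Lambda>. (c lam * c mu) * integral {0..L} (H lam mu)) = (c lam)^2 * integral {0..L} (H lam lam)"
      using fin lam by (simp add: power2_eq_square)
  qed
  finally show "integral {0..L} (\<lambda>x. Re (hform n (J x) (\<lambda>i. \<Sum>lam\<in>\<Lambda>. of_real (c lam) * V lam x i)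
                                             (\<lambda>i. \<Sum>lam\<in>\<Lambda>. of_real (c lam) * V lam x i)))
      = (\<Sum>lam\<in>\<Lambda>. (c lam)^2 * integral {0..L} (\<lambda>x. Re (hform n (J x) (V lam x) (V lam x))))"
    unfolding pw H_def .
qed

lemma circle_eigenfun_eq_0_if_energy_eq_0:
  assumes e: "circle_eigenfun n G J L lam v" and G: "G \<in> O_n2 n" and Jsp: "\<And>x. J x \<in> Jspace n"
    and cJ: "\<And>i j. continuous_on {0..L} (\<lambda>x. J x i j)" and L: "L > 0"
    and int0: "integral {0..L} (\<lambda>x. Re (hform n (J x) (v x) (v x))) = 0"
  shows "v x i = 0"
proof (rule circle_eigenfun_eq_0[OF e G L])
  fix y j assume y: "y \<in> {0..L}" and j: "j < n+2"
  have cH: "continuous_on {0..L} (\<lambda>x. Re (hform n (J x) (v x) (v x)))"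
    unfolding hform_expand by (intro continuous_intros cJ circle_eigenfun_continuous_on[OF e])
  then have "((\<lambda>x. Re (hform n (J x) (v x) (v x))) has_integral 0) {0..L}"
    using int0 integrable_continuous_interval by (metis has_integral_integrable_integral)
  then have "Re (hform n (J y) (v y) (v y)) = 0"
    using has_integral_0_cbox_imp_0[of 0 L "\<lambda>x. Re (hform n (J x) (v x) (v x))" y] cH hform_self_nonneg[OF Jsp] y L
    by (auto simp: cbox_interval)
  then show "v y j = 0" by (rule hform_self_eq_0D[OF Jsp _ j])
qed

section \<open>Windows of eigenvalues\<close>

definition window_determined :: "nat \<Rightarrow> rmat \<Rightarrow> (real \<Rightarrow> rmat) \<Rightarrow> real \<Rightarrow> real \<Rightarrow> bool" where
  "window_determined n G J L \<delta> \<longleftrightarrow> (\<forall>a \<Lambda> V. finite \<Lambda> \<longrightarrow> \<Lambda> \<subseteq> {a..a+\<delta>} \<longrightarrow>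
     (\<forall>lam\<in>\<Lambda>. circle_eigenfun n G J L lam (V lam)) \<longrightarrow>
     (\<forall>i<n+2. (\<Sum>lam\<in>\<Lambda>. V lam 0 i) = 0) \<longrightarrow> (\<forall>lam\<in>\<Lambda>. \<forall>x i. V lam x i = 0))"

lemma window_determinedD:
  assumes "window_determined n G J L \<delta>" and "finite \<Lambda>" and "\<Lambda> \<subseteq> {a..a+\<delta>}"
    and "\<And>lam. lam \<in> \<Lambda> \<Longrightarrow> circle_eigenfun n G J L lam (V lam)"
    and "\<And>i. i < n+2 \<Longrightarrow> (\<Sum>lam\<in>\<Lambda>. V lam 0 i) = 0" and "lam \<in> \<Lambda>"
  shows "V lam x i = 0"
proof -
  from assms(1) have "finite \<Lambda> \<longrightarrow> \<Lambda> \<subseteq> {a..a+\<delta>} \<longrightarrow>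
      (\<forall>lam\<in>\<Lambda>. circle_eigenfun n G J L lam (V lam)) \<longrightarrow>
      (\<forall>i<n+2. (\<Sum>lam\<in>\<Lambda>. V lam 0 i) = 0) \<longrightarrow> (\<forall>lam\<in>\<Lambda>. \<forall>x i. V lam x i = 0)"
    unfolding window_determined_def by blast
  then show ?thesis using assms(2-6) by blast
qed

lemma window_determined_mono:
  assumes "window_determined n G J L \<delta>" and "\<delta>' \<le> \<delta>"
  shows "window_determined n G J L \<delta>'"
  unfolding window_determined_def
proof (intro allI impI)
  fix a \<Lambda> V
  assume "finite \<Lambda>" "\<Lambda> \<subseteq> {a..a+\<delta>'}" "\<forall>lam\<in>\<Lambda>. circle_eigenfun n G J L lam (V lam)"
    "\<forall>i<n+2. (\<Sum>lam\<in>\<Lambda>. V lam 0 i) = 0"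
  moreover have "\<Lambda> \<subseteq> {a..a+\<delta>}" using \<open>\<Lambda> \<subseteq> {a..a+\<delta>'}\<close> assms(2) by auto
  ultimately show "\<forall>lam\<in>\<Lambda>. \<forall>x i. V lam x i = 0" by (auto intro: window_determinedD[OF assms(1)])
qed

lemma window_determined_exists:
  assumes L: "L > 0" and G: "G \<in> O_n2 n" and Jsp: "\<And>x. J x \<in> Jspace n"
    and Jsm: "\<And>i j. smooth_fun (\<lambda>x. J x i j)"
  obtains \<delta> where "\<delta> > 0" and "window_determined n G J L \<delta>"
proof -
  let ?N = "n+2"
  obtain E where E0: "E \<ge> 0" and En: "\<And>a u ud f x. (\<And>x i. ((\<lambda>t. u t i) has_vector_derivative ud x i) (at x)) \<Longrightarrow>
      (\<And>x i. i < n+2 \<Longrightarrow> ud x i = - \<i> * cmatvec (n+2) (J x) (\<lambda>l. of_real a * u x l + f x l) i) \<Longrightarrow>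
      (\<And>i. continuous_on {0..L} (\<lambda>x. f x i)) \<Longrightarrow> (\<And>i. i < n+2 \<Longrightarrow> u 0 i = 0) \<Longrightarrow> x \<in> {0..L} \<Longrightarrow>
      Re (hform n (J x) (u x) (u x)) \<le> E * integral {0..L} (\<lambda>x. Re (hform n (J x) (f x) (f x)))"
    using energy_estimate[OF Jsp Jsm, where T=L] by blast
  define \<delta> where "\<delta> = 1 / (2 + L * E)"
  have LE: "L * E \<ge> 0" using L E0 by simp
  have dpos: "\<delta> > 0" unfolding \<delta>_def using LE by simp
  have small: "L * E * \<delta>^2 \<le> 1/2"
  proof -
    have "L * E * \<delta> \<le> 1" "\<delta> \<le> 1/2" unfolding \<delta>_def using LE by (simp_all add: field_simps)
    then show ?thesis using mult_mono[of "L * E * \<delta>" 1 \<delta> "1/2"] dpos by (simp add: power2_eq_square mult.assoc)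
  qed
  have cJ: "continuous_on {0..L} (\<lambda>x. J x i j)" for i j by (rule smooth_fun_continuous_on[OF Jsm])
  show ?thesis
  proof (rule that[OF dpos], unfold window_determined_def, intro allI impI ballI)
    fix a \<Lambda> V
    assume fin: "finite \<Lambda>" and sub: "\<Lambda> \<subseteq> {a..a+\<delta>}"
      and eig: "\<forall>lam\<in>\<Lambda>. circle_eigenfun n G J L lam (V lam)"
      and z0: "\<forall>i<n+2. (\<Sum>lam\<in>\<Lambda>. V lam 0 i) = 0"
    define r where "r = (\<lambda>lam. integral {0..L} (\<lambda>x. Re (hform n (J x) (V lam x) (V lam x))))"
    have rnn: "r lam \<ge> 0" if "lam \<in> \<Lambda>" for lam
    proof -
      have "continuous_on {0..L} (\<lambda>x. Re (hform n (J x) (V lam x) (V lam x)))"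
        unfolding hform_expand using that eig
        by (intro continuous_intros cJ circle_eigenfun_continuous_on) auto
      then show ?thesis unfolding r_def
        by (intro Henstock_Kurzweil_Integration.integral_nonneg integrable_continuous_interval
            hform_self_nonneg[OF Jsp])
    qed
    note eigensum = integral_hform_circle_eigensum[OF fin _ G Jsp cJ less_imp_le[OF L]]
    define s where "s = (\<lambda>x i. \<Sum>lam\<in>\<Lambda>. V lam x i)"
    define f where "f = (\<lambda>x i. \<Sum>lam\<in>\<Lambda>. of_real (lam - a) * V lam x i)"
    define S where "S = integral {0..L} (\<lambda>x. Re (hform n (J x) (s x) (s x)))"
    define \<Phi> where "\<Phi> = integral {0..L} (\<lambda>x. Re (hform n (J x) (f x) (f x)))"
    have S_eq: "S = (\<Sum>lam\<in>\<Lambda>. r lam)"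
      using eigensum(2)[of V "\<lambda>_. 1"] eig by (simp add: S_def s_def r_def)
    have "\<Phi> = (\<Sum>lam\<in>\<Lambda>. (lam - a)^2 * r lam)"
      using eigensum(2)[of V "\<lambda>lam. lam - a"] eig by (simp add: \<Phi>_def f_def r_def)
    also have "\<dots> \<le> (\<Sum>lam\<in>\<Lambda>. \<delta>^2 * r lam)"
      using sub dpos rnn by (intro sum_mono mult_right_mono power_mono) auto
    finally have Phi_le: "\<Phi> \<le> \<delta>^2 * S" unfolding S_eq by (simp add: sum_distrib_left)
    have Snn: "S \<ge> 0" unfolding S_eq by (intro sum_nonneg rnn)
    have energy: "Re (hform n (J x) (s x) (s x)) \<le> E * \<Phi>" if "x \<in> {0..L}" for x
      unfolding \<Phi>_def
    proof (rule En[where a=a])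
      fix x i
      show "((\<lambda>t. s t i) has_vector_derivative
          (\<Sum>lam\<in>\<Lambda>. - \<i> * of_real lam * cmatvec ?N (J x) (V lam x) i)) (at x)"
        unfolding s_def using eig
        by (intro has_vector_derivative_sum circle_eigenfun_has_vector_derivative Jsp) auto
      have "(\<lambda>l. of_real a * s x l + f x l) = (\<lambda>l. \<Sum>lam\<in>\<Lambda>. of_real lam * V lam x l)"
        unfolding s_def f_def by (rule ext) (simp add: sum_distrib_left sum.distrib[symmetric] algebra_simps)
      then show "(\<Sum>lam\<in>\<Lambda>. - \<i> * of_real lam * cmatvec ?N (J x) (V lam x) i)
          = - \<i> * cmatvec ?N (J x) (\<lambda>l. of_real a * s x l + f x l) i"
        by (simp add: cmatvec_sum cmatvec_scale sum_distrib_left mult_ac)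
    next
      show "continuous_on {0..L} (\<lambda>x. f x i)" for i
        unfolding f_def using eig by (intro continuous_intros circle_eigenfun_continuous_on) auto
    qed (use z0 that in \<open>auto simp: s_def\<close>)
    have "S \<le> integral {0..L} (\<lambda>x. E * \<Phi>)"
      unfolding S_def s_def
      using eigensum(1)[of V "\<lambda>_. 1"] eig energy
      by (intro integral_le) (auto simp: s_def)
    also have "\<dots> = L * E * \<Phi>" using L by simp
    also have "\<dots> \<le> L * E * (\<delta>^2 * S)" using L E0 Phi_le by (intro mult_left_mono) auto
    also have "\<dots> \<le> 1/2 * S" using small Snn mult_right_mono by (metis mult.assoc)
    finally have "S = 0" using Snn by simp
    then have "r lam = 0" if "lam \<in> \<Lambda>" for lam
      using fin rnn that unfolding S_eq by (simp add: sum_nonneg_eq_0_iff)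
    then show "V lam x i = 0" if "lam \<in> \<Lambda>" for lam x i
      using eig that unfolding r_def
      by (intro circle_eigenfun_eq_0_if_energy_eq_0[OF _ G Jsp cJ L]) auto
  qed
qed

section \<open>Multiplicities in a window\<close>

lemma underdetermined_homogeneous_system_nontrivial_solution:
  fixes w :: "'j \<Rightarrow> 'r \<Rightarrow> complex"
  assumes "finite R" "finite J" "card R < card J"
  shows "\<exists>cf. (\<exists>j\<in>J. cf j \<noteq> 0) \<and> (\<forall>r\<in>R. (\<Sum>j\<in>J. cf j * w j r) = 0)"
  using assms
proof (induction R arbitrary: J w rule: finite_induct)
  case empty
  then have "J \<noteq> {}" by auto
  then show ?case by (intro exI[of _ "\<lambda>_. 1"]) auto
next
  case (insert r0 R)
  show ?case
  proof (cases "\<forall>j\<in>J. w j r0 = 0")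
    case True
    have "card R < card J" using insert by simp
    from insert.IH[OF \<open>finite J\<close> this, of w] obtain cf where
      "\<exists>j\<in>J. cf j \<noteq> 0" "\<forall>r\<in>R. (\<Sum>j\<in>J. cf j * w j r) = 0" by blast
    then show ?thesis using True by (intro exI[of _ cf]) auto
  next
    case False
    then obtain p where p: "p \<in> J" "w p r0 \<noteq> 0" by blast
    define J' where "J' = J - {p}"
    have J': "finite J'" "card R < card J'"
      using insert p unfolding J'_def by (simp_all add: card_Diff_singleton)
    \<comment> \<open>eliminate the unknown \<open>p\<close> using the equation \<open>r0\<close>\<close>
    define w' where "w' = (\<lambda>j r. w j r - (w j r0 / w p r0) * w p r)"
    from insert.IH[OF J', of w'] obtain cf' where
      cf': "\<exists>j\<in>J'. cf' j \<noteq> 0" "\<forall>r\<in>R. (\<Sum>j\<in>J'. cf' j * w' j r) = 0" by blast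
    define t where "t = (\<Sum>j\<in>J'. cf' j * w j r0)"
    define cf where "cf = (\<lambda>j. if j = p then - t / w p r0 else cf' j)"
    have split: "(\<Sum>j\<in>J. cf j * w j r) = - t / w p r0 * w p r + (\<Sum>j\<in>J'. cf' j * w j r)" for r
    proof -
      have "(\<Sum>j\<in>J. cf j * w j r) = cf p * w p r + (\<Sum>j\<in>J'. cf j * w j r)"
        unfolding J'_def using insert p by (simp add: sum.remove)
      moreover have "(\<Sum>j\<in>J'. cf j * w j r) = (\<Sum>j\<in>J'. cf' j * w j r)"
        unfolding J'_def cf_def by (intro sum.cong) auto
      ultimately show ?thesis by (simp add: cf_def)
    qed
    show ?thesis
    proof (intro exI[of _ cf] conjI ballI)
      obtain j where "j \<in> J'" "cf' j \<noteq> 0" using cf'(1) by blast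
      then show "\<exists>j\<in>J. cf j \<noteq> 0" unfolding cf_def J'_def by (intro bexI[of _ j]) auto
    next
      fix r assume "r \<in> insert r0 R"
      then consider "r = r0" | "r \<in> R" by blast
      then show "(\<Sum>j\<in>J. cf j * w j r) = 0"
      proof cases
        case 1
        then show ?thesis using p split[of r0] unfolding t_def by simp
      next
        case 2
        have "(\<Sum>j\<in>J'. cf' j * w' j r) = (\<Sum>j\<in>J'. cf' j * w j r - cf' j * w j r0 * (w p r / w p r0))"
          unfolding w'_def by (intro sum.cong) (auto simp: algebra_simps)
        also have "\<dots> = (\<Sum>j\<in>J'. cf' j * w j r) - t / w p r0 * w p r"
          unfolding t_def by (simp add: sum_subtractf sum_distrib_right sum_divide_distrib)
        finally show ?thesis using cf'(2) 2 split[of r] by simp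
      qed
    qed
  qed
qed

lemma eigensection_circle_eigenfun:
  assumes e: "eigensection n c L g Jb lam S" and k: "k < c"
  shows "circle_eigenfun n (g k) (Jb k) (L k) lam (S k)"
proof -
  have b: "bsection n c L g S" using e unfolding eigensection_def by blast
  then have "\<forall>i x. (\<lambda>t. S k t i) differentiable at x"
    using k unfolding bsection_def by (auto intro: smooth_fun_differentiable)
  moreover have "\<forall>x i. n+2 \<le> i \<longrightarrow> S k x i = 0" "\<forall>x. S k (x + L k) = cmatvec (n+2) (g k) (S k x)"
    using b k unfolding bsection_def by auto
  moreover have "\<forall>x. \<forall>i<n+2. \<i> * (\<Sum>j<n+2. of_real (Jb k x i j) * vector_derivative (\<lambda>t. S k t j) (at x))
      = of_real lam * S k x i"
    using e k unfolding eigensection_def by blast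
  ultimately show ?thesis unfolding circle_eigenfun_def by blast
qed

lemma boundary_window_determined:
  assumes bd: "boundary_data n c L g Jb"
  obtains \<delta> where "\<delta> > 0" and "\<And>k. k < c \<Longrightarrow> window_determined n (g k) (Jb k) (L k) \<delta>"
proof -
  have "\<forall>k\<in>{..<c}. \<exists>\<delta>>0. window_determined n (g k) (Jb k) (L k) \<delta>"
  proof
    fix k assume k: "k \<in> {..<c}"
    have "L k > 0" "g k \<in> SO0_n2 n" "\<And>x. Jb k x \<in> Jspace n" "\<And>i j. smooth_fun (\<lambda>x. Jb k x i j)"
      using bd k unfolding boundary_data_def by auto
    from window_determined_exists[OF this(1) subsetD[OF SO0_n2_subset_O_n2 this(2)] this(3,4)]
    show "\<exists>\<delta>>0. window_determined n (g k) (Jb k) (L k) \<delta>" by blast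
  qed
  from bchoice[OF this] obtain d
    where d: "\<forall>k\<in>{..<c}. d k > 0 \<and> window_determined n (g k) (Jb k) (L k) (d k)"
    by blast
  define \<delta> where "\<delta> = Min (insert 1 (d ` {..<c}))"
  show ?thesis
  proof (rule that)
    show "\<delta> > 0" unfolding \<delta>_def using d by (subst Min_gr_iff) auto
    show "window_determined n (g k) (Jb k) (L k) \<delta>" if "k < c" for k
    proof (rule window_determined_mono)
      show "window_determined n (g k) (Jb k) (L k) (d k)" using d that by blast
      show "\<delta> \<le> d k" unfolding \<delta>_def using that by (intro Min_le) auto
    qed
  qed
qed

text \<open>
  In a window, linearly independent eigensections are determined by their values at the
  \<open>c\<close> base points, which lie in a space of dimension \<open>c (n + 2)\<close>.
\<close>
lemma window_sum_lin_indep_le: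
  assumes win: "\<And>k. k < c \<Longrightarrow> window_determined n (g k) (Jb k) (L k) \<delta>"
    and fin: "finite \<Lambda>" and sub: "\<Lambda> \<subseteq> {a..a+\<delta>}"
    and eig: "\<And>lam j. lam \<in> \<Lambda> \<Longrightarrow> j < m lam \<Longrightarrow> eigensection n c L g Jb lam (S lam j)"
    and li: "\<And>lam. lam \<in> \<Lambda> \<Longrightarrow> lin_indep_sections (m lam) (S lam)"
  shows "(\<Sum>lam\<in>\<Lambda>. m lam) \<le> c * (n+2)"
proof (rule ccontr)
  assume contra: "\<not> ?thesis"
  define P where "P = Sigma \<Lambda> (\<lambda>lam. {..<m lam})"
  define R where "R = {..<c} \<times> {..<n+2}"
  have fP: "finite P" unfolding P_def using fin by auto
  have "card R < card P" using contra fin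
    unfolding P_def R_def by (simp add: card_cartesian_product)
  from underdetermined_homogeneous_system_nontrivial_solution[OF _ fP this,
      of "\<lambda>p r. S (fst p) (snd p) (fst r) 0 (snd r)"]
  obtain cf where cf: "\<exists>p\<in>P. cf p \<noteq> 0"
    "\<forall>r\<in>R. (\<Sum>p\<in>P. cf p * S (fst p) (snd p) (fst r) 0 (snd r)) = 0"
    unfolding R_def by blast
  define V where "V = (\<lambda>lam k x i. \<Sum>j\<in>{..<m lam}. cf (lam, j) * S lam j k x i)"
  have V0: "V lam k x i = 0" if lam: "lam \<in> \<Lambda>" for lam k x i
  proof (cases "k < c")
    case k: True
    have "circle_eigenfun n (g k) (Jb k) (L k) mu (V mu k)" if "mu \<in> \<Lambda>" for mu
      unfolding V_def
      by (rule circle_eigenfun_lincomb) (use that k in \<open>auto intro: eigensection_circle_eigenfun eig\<close>)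
    moreover have "(\<Sum>mu\<in>\<Lambda>. V mu k 0 i) = 0" if "i < n+2" for i
    proof -
      have "(\<Sum>mu\<in>\<Lambda>. V mu k 0 i) = (\<Sum>p\<in>P. cf p * S (fst p) (snd p) k 0 i)"
        unfolding V_def P_def using fin by (simp add: sum.Sigma split_def)
      also have "\<dots> = 0" using cf(2) k that unfolding R_def by auto
      finally show ?thesis .
    qed
    ultimately show ?thesis by (rule window_determinedD[OF win[OF k] fin sub _ _ lam])
  next
    case False
    have "S lam j k x i = 0" if "j < m lam" for j
      using eig[OF lam that] False unfolding eigensection_def bsection_def by auto
    then show ?thesis unfolding V_def by simp
  qed
  have "cf p = 0" if p: "p \<in> P" for p
  proof -
    obtain lam j where pj: "p = (lam, j)" "lam \<in> \<Lambda>" "j < m lam" using p unfolding P_def by auto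
    have "\<forall>k x i. (\<Sum>j<m lam. cf (lam, j) * S lam j k x i) = 0"
      using V0[OF pj(2)] unfolding V_def by simp
    then show ?thesis
      using spec[OF li[OF pj(2), unfolded lin_indep_sections_def], of "\<lambda>j. cf (lam, j)"] pj by simp
  qed
  then show False using cf(1) by blast
qed

lemma eig_mult_attained:
  assumes win: "\<And>k. k < c \<Longrightarrow> window_determined n (g k) (Jb k) (L k) \<delta>" and dpos: "\<delta> > 0"
  shows "\<exists>S. (\<forall>j<eig_mult n c L g Jb lam. eigensection n c L g Jb lam (S j)) \<and>
     lin_indep_sections (eig_mult n c L g Jb lam) S"
proof -
  define X where "X = {m. \<exists>S. (\<forall>j<m. eigensection n c L g Jb lam (S j)) \<and> lin_indep_sections m S}"
  have "X \<subseteq> {..c * (n+2)}"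
  proof
    fix m assume "m \<in> X"
    then obtain S where "\<forall>j<m. eigensection n c L g Jb lam (S j)" "lin_indep_sections m S"
      unfolding X_def by blast
    then have "(\<Sum>l\<in>{lam}. m) \<le> c * (n+2)"
      using dpos by (intro window_sum_lin_indep_le[OF win, where a=lam and S="\<lambda>_. S"]) auto
    then show "m \<in> {..c * (n+2)}" by simp
  qed
  then have fin: "finite X" by (rule finite_subset) simp
  have ne: "0 \<in> X" unfolding X_def lin_indep_sections_def by auto
  have "eig_mult n c L g Jb lam = Max X"
    unfolding eig_mult_def X_def[symmetric] using fin ne by (auto simp: Sup_nat_def)
  moreover have "Max X \<in> X" using fin ne by (intro Max_in) auto
  ultimately show ?thesis unfolding X_def by simp
qed

lemma window_eig_mult_sum_le:
  assumes win: "\<And>k. k < c \<Longrightarrow> window_determined n (g k) (Jb k) (L k) \<delta>" and dpos: "\<delta> > 0"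
    and "finite F" "F \<subseteq> {a..a+\<delta>}"
  shows "(\<Sum>x\<in>F. eig_mult n c L g Jb x) \<le> c * (n+2)"
proof -
  have "\<forall>lam. \<exists>S. (\<forall>j<eig_mult n c L g Jb lam. eigensection n c L g Jb lam (S j)) \<and>
     lin_indep_sections (eig_mult n c L g Jb lam) S"
    using eig_mult_attained[where c=c and n=n and L=L and g=g and Jb=Jb and \<delta>=\<delta>, OF win dpos]
    by blast
  from choice[OF this] obtain S where S: "\<forall>lam. (\<forall>j<eig_mult n c L g Jb lam. eigensection n c L g Jb lam (S lam j)) \<and>
     lin_indep_sections (eig_mult n c L g Jb lam) (S lam)"
    by blast
  show ?thesis by (rule window_sum_lin_indep_le[OF win assms(3,4), where S=S]) (use S in auto)
qed

section \<open>Dirichlet series with uniformly bounded windows\<close>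

locale window_bounded =
  fixes mu :: "real \<Rightarrow> nat" and \<delta> :: real and K :: nat
  assumes delta_pos: "\<delta> > 0"
    and window_sum_le: "\<And>a F. finite F \<Longrightarrow> F \<subseteq> {a..a+\<delta>} \<Longrightarrow> (\<Sum>x\<in>F. mu x) \<le> K"
begin

lemma finite_support_window: "finite ({x. mu x > 0} \<inter> {a..a+\<delta>})"
proof -
  have "card F \<le> K" if "F \<subseteq> {x. mu x > 0} \<inter> {a..a+\<delta>}" "finite F" for F
  proof -
    have "card F = (\<Sum>x\<in>F. 1::nat)" by simp
    also have "\<dots> \<le> (\<Sum>x\<in>F. mu x)" using that by (intro sum_mono) auto
    also have "\<dots> \<le> K" using window_sum_le that by blast
    finally show ?thesis .
  qed
  then show ?thesis using finite_if_finite_subsets_card_bdd by blast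
qed

lemma finite_support_Icc: "finite ({x. mu x > 0} \<inter> {a..b})"
proof -
  define M where "M = nat \<lceil>(b - a) / \<delta>\<rceil>"
  have "{x. mu x > 0} \<inter> {a..b} \<subseteq> (\<Union>j\<in>{0..M}. {x. mu x > 0} \<inter> {a + real j * \<delta>..a + real j * \<delta> + \<delta>})"
  proof
    fix x assume x: "x \<in> {x. mu x > 0} \<inter> {a..b}"
    define j where "j = nat \<lfloor>(x - a) / \<delta>\<rfloor>"
    have "0 \<le> (x - a) / \<delta>" "(x - a) / \<delta> \<le> (b - a) / \<delta>"
      using x delta_pos by (auto intro: divide_right_mono)
    then have "j \<le> M" "real j \<le> (x - a) / \<delta>" "(x - a) / \<delta> < real j + 1"
      unfolding j_def M_def by linarith+
    then show "x \<in> (\<Union>j\<in>{0..M}. {x. mu x > 0} \<inter> {a + real j * \<delta>..a + real j * \<delta> + \<delta>})"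
      using x delta_pos by (auto simp: field_simps intro!: bexI[of _ j])
  qed
  then show ?thesis by (rule finite_subset) (intro finite_UN_I finite_atLeastAtMost finite_support_window)
qed

lemma support_bounded_away_from_0:
  obtains \<rho> where "\<rho> > 0" and "\<And>x. x \<noteq> 0 \<Longrightarrow> mu x > 0 \<Longrightarrow> \<rho> \<le> \<bar>x\<bar>"
proof -
  define Z where "Z = {x. mu x > 0} \<inter> {-1..1} - {0}"
  have fin: "finite (abs ` Z)" unfolding Z_def using finite_support_Icc by auto
  show ?thesis
  proof (rule that[of "Min (insert 1 (abs ` Z))"])
    show "Min (insert 1 (abs ` Z)) > 0" using fin by (subst Min_gr_iff) (auto simp: Z_def)
    fix x assume x: "x \<noteq> 0" "mu x > 0"
    show "Min (insert 1 (abs ` Z)) \<le> \<bar>x\<bar>"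
    proof (cases "\<bar>x\<bar> \<le> 1")
      case True
      then have "\<bar>x\<bar> \<in> abs ` Z" using x by (auto simp: Z_def abs_le_iff)
      then show ?thesis using fin by (intro Min.coboundedI) auto
    next
      case False
      have "Min (insert 1 (abs ` Z)) \<le> 1" using fin by (intro Min.coboundedI) auto
      then show ?thesis using False by linarith
    qed
  qed
qed

text \<open>The shell \<open>j \<delta> \<le> \<bar>x\<bar> < (j + 1) \<delta>\<close> consists of two windows.\<close>
lemma shell_sum_le:
  assumes "finite F"
  shows "(\<Sum>x\<in>{x\<in>F. nat \<lfloor>\<bar>x\<bar> / \<delta>\<rfloor> = j}. mu x) \<le> 2 * K"
proof -
  let ?G = "{x\<in>F. nat \<lfloor>\<bar>x\<bar> / \<delta>\<rfloor> = j}"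
  have shell: "real j * \<delta> \<le> \<bar>x\<bar> \<and> \<bar>x\<bar> \<le> real j * \<delta> + \<delta>" if "x \<in> ?G" for x
  proof -
    have "nat \<lfloor>\<bar>x\<bar> / \<delta>\<rfloor> = j" "0 \<le> \<bar>x\<bar> / \<delta>" using that delta_pos by auto
    then have "real j \<le> \<bar>x\<bar> / \<delta>" "\<bar>x\<bar> / \<delta> < real j + 1" by linarith+
    then show ?thesis using delta_pos by (simp add: field_simps)
  qed
  have "{x\<in>?G. x \<ge> 0} \<union> {x\<in>?G. \<not> x \<ge> 0} = ?G" by auto
  then have "(\<Sum>x\<in>?G. mu x) = (\<Sum>x\<in>{x\<in>?G. x \<ge> 0} \<union> {x\<in>?G. \<not> x \<ge> 0}. mu x)" by simp
  also have "\<dots> = (\<Sum>x\<in>{x\<in>?G. x \<ge> 0}. mu x) + (\<Sum>x\<in>{x\<in>?G. \<not> x \<ge> 0}. mu x)"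
    using assms by (intro sum.union_disjoint) auto
  also have "\<dots> \<le> K + K"
  proof (intro add_mono window_sum_le)
    show "{x\<in>?G. x \<ge> 0} \<subseteq> {real j * \<delta>..real j * \<delta> + \<delta>}"
    proof
      fix x assume "x \<in> {x\<in>?G. x \<ge> 0}"
      then have "x \<in> ?G" "x \<ge> 0" by auto
      with shell[OF this(1)] show "x \<in> {real j * \<delta>..real j * \<delta> + \<delta>}" by simp
    qed
    show "{x\<in>?G. \<not> x \<ge> 0} \<subseteq> {-(real j * \<delta> + \<delta>)..-(real j * \<delta> + \<delta>) + \<delta>}"
    proof
      fix x assume "x \<in> {x\<in>?G. \<not> x \<ge> 0}"
      then have "x \<in> ?G" "x < 0" by auto
      with shell[OF this(1)] show "x \<in> {-(real j * \<delta> + \<delta>)..-(real j * \<delta> + \<delta>) + \<delta>}" by simp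
    qed
  qed (use assms in auto)
  finally show ?thesis by simp
qed

lemma inverse_square_le_shell:
  assumes \<rho>: "\<rho> > 0" "\<rho> \<le> \<bar>x\<bar>" and j: "nat \<lfloor>\<bar>x\<bar> / \<delta>\<rfloor> = j"
  shows "1 / x^2 \<le> 4 * (1/\<rho>^2 + 1/\<delta>^2) * inverse (real (Suc j) ^ 2)"
proof (cases "j = 0")
  case True
  have "\<rho>^2 \<le> x^2" using \<rho> by (metis less_imp_le power2_abs power_mono)
  then have "1 / x^2 \<le> 1 / \<rho>^2" using \<rho> by (simp add: frac_le)
  also have "\<dots> \<le> 4 * (1/\<rho>^2 + 1/\<delta>^2)"
  proof -
    have "0 \<le> 1/\<rho>^2" "0 \<le> 1/\<delta>^2" by simp_all
    then show ?thesis by (smt (verit))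
  qed
  finally show ?thesis using True by simp
next
  case False
  have "real j \<le> \<bar>x\<bar> / \<delta>" using j delta_pos by (auto simp: le_nat_floor)
  then have "real j * \<delta> \<le> \<bar>x\<bar>" using delta_pos by (simp add: field_simps)
  moreover have "real (Suc j) * \<delta> / 2 \<le> real j * \<delta>" using False delta_pos by (simp add: field_simps)
  ultimately have "real (Suc j) * \<delta> / 2 \<le> \<bar>x\<bar>" by linarith
  then have "(real (Suc j) * \<delta> / 2)^2 \<le> x^2"
    using delta_pos by (metis power2_abs power_mono zero_le_divide_iff of_nat_0_le_iff
        mult_nonneg_nonneg less_imp_le zero_le_numeral)
  then have "1 / x^2 \<le> 1 / (real (Suc j) * \<delta> / 2)^2"
    using delta_pos by (intro frac_le) auto
  also have "\<dots> = 4 * (1/\<delta>^2) * inverse (real (Suc j) ^ 2)" by (simp add: field_simps power2_eq_square)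
  also have "\<dots> \<le> 4 * (1/\<rho>^2 + 1/\<delta>^2) * inverse (real (Suc j) ^ 2)"
    using \<rho> by (intro mult_right_mono mult_left_mono) auto
  finally show ?thesis .
qed

lemma summable_on_mult_div_square: "(\<lambda>x. real (mu x) / x^2) summable_on {x. x \<noteq> 0 \<and> mu x > 0}"
proof (rule nonneg_bdd_above_summable_on)
  obtain \<rho> where \<rho>: "\<rho> > 0" "\<And>x. x \<noteq> 0 \<Longrightarrow> mu x > 0 \<Longrightarrow> \<rho> \<le> \<bar>x\<bar>"
    using support_bounded_away_from_0 by blast
  define C where "C = 4 * (1/\<rho>^2 + 1/\<delta>^2)"
  define shell where "shell = (\<lambda>x::real. nat \<lfloor>\<bar>x\<bar> / \<delta>\<rfloor>)"
  have sum2: "summable (\<lambda>j. inverse (real (Suc j) ^ 2))"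
    using inverse_power_summable[of 2, where 'a=real] by (subst summable_Suc_iff) simp
  show "bdd_above (sum (\<lambda>x. real (mu x) / x^2) ` {F. F \<subseteq> {x. x \<noteq> 0 \<and> mu x > 0} \<and> finite F})"
  proof (rule bdd_aboveI2)
    fix F assume "F \<in> {F. F \<subseteq> {x. x \<noteq> 0 \<and> mu x > 0} \<and> finite F}"
    then have F: "finite F" "F \<subseteq> {x. x \<noteq> 0 \<and> mu x > 0}" by auto
    have "(\<Sum>x\<in>F. real (mu x) / x^2) = (\<Sum>j\<in>shell ` F. \<Sum>x\<in>{x\<in>F. shell x = j}. real (mu x) / x^2)"
      using F by (intro sum.group[symmetric]) auto
    also have "\<dots> \<le> (\<Sum>j\<in>shell ` F. 2 * real K * C * inverse (real (Suc j) ^ 2))"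
    proof (intro sum_mono)
      fix j
      have "(\<Sum>x\<in>{x\<in>F. shell x = j}. real (mu x) / x^2)
          \<le> (\<Sum>x\<in>{x\<in>F. shell x = j}. real (mu x) * (C * inverse (real (Suc j) ^ 2)))"
      proof (intro sum_mono)
        fix x assume "x \<in> {x\<in>F. shell x = j}"
        then have "1 / x^2 \<le> C * inverse (real (Suc j) ^ 2)"
          using F \<rho> unfolding C_def shell_def by (intro inverse_square_le_shell) auto
        then have "real (mu x) * (1 / x^2) \<le> real (mu x) * (C * inverse (real (Suc j) ^ 2))"
          by (intro mult_left_mono) auto
        then show "real (mu x) / x^2 \<le> real (mu x) * (C * inverse (real (Suc j) ^ 2))" by simp
      qed
      also have "\<dots> = real (\<Sum>x\<in>{x\<in>F. shell x = j}. mu x) * (C * inverse (real (Suc j) ^ 2))"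
        by (simp add: sum_distrib_right)
      also have "\<dots> \<le> 2 * real K * (C * inverse (real (Suc j) ^ 2))"
        using of_nat_mono[where 'a=real, OF shell_sum_le[OF F(1), of j]] \<rho>(1)
        unfolding shell_def C_def by (intro mult_right_mono) auto
      finally show "(\<Sum>x\<in>{x\<in>F. shell x = j}. real (mu x) / x^2) \<le> 2 * real K * C * inverse (real (Suc j) ^ 2)"
        by (simp add: mult.assoc)
    qed
    also have "\<dots> \<le> 2 * real K * C * (\<Sum>j. inverse (real (Suc j) ^ 2))"
      unfolding sum_distrib_left[symmetric] using F sum2 \<rho>(1)
      by (intro mult_left_mono sum_le_suminf) (auto simp: C_def)
    finally show "(\<Sum>x\<in>F. real (mu x) / x^2) \<le> 2 * real K * C * (\<Sum>j. inverse (real (Suc j) ^ 2))" .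
  qed
qed auto

lemma eta_series_summable_on:
  assumes s: "Re s > 2"
  shows "(\<lambda>lam. of_nat (mu lam) * complex_of_real (sgn lam) * exp (- s * complex_of_real (ln \<bar>lam\<bar>)))
           summable_on {lam. lam \<noteq> 0 \<and> mu lam > 0}"
proof -
  obtain \<rho> where \<rho>: "\<rho> > 0" "\<And>x. x \<noteq> 0 \<Longrightarrow> mu x > 0 \<Longrightarrow> \<rho> \<le> \<bar>x\<bar>"
    using support_bounded_away_from_0 by blast
  define c where "c = \<rho> powr (2 - Re s)"
  have norm_eq: "norm (c * (real (mu x) / x^2)) = c * (real (mu x) / x^2)" for x
    unfolding c_def by simp
  have "(\<lambda>x. c * (real (mu x) / x^2)) summable_on {x. x \<noteq> 0 \<and> mu x > 0}"
    by (intro summable_on_cmult_right summable_on_mult_div_square)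
  then have "(\<lambda>x. norm (c * (real (mu x) / x^2))) summable_on {x. x \<noteq> 0 \<and> mu x > 0}"
    by (simp only: norm_eq)
  then have "(\<lambda>lam. norm (of_nat (mu lam) * complex_of_real (sgn lam) * exp (- s * complex_of_real (ln \<bar>lam\<bar>))))
      summable_on {lam. lam \<noteq> 0 \<and> mu lam > 0}"
  proof (rule Infinite_Sum.abs_summable_on_comparison_test)
    fix x assume x: "x \<in> {lam. lam \<noteq> 0 \<and> mu lam > 0}"
    then have ax: "\<bar>x\<bar> > 0" by auto
    have "norm (of_nat (mu x) * complex_of_real (sgn x) * exp (- s * complex_of_real (ln \<bar>x\<bar>)))
        = real (mu x) * \<bar>x\<bar> powr (- Re s)"
      using ax by (simp add: norm_mult powr_def sgn_if)
    also have "\<bar>x\<bar> powr (- Re s) = \<bar>x\<bar> powr (-2) * \<bar>x\<bar> powr (2 - Re s)"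
      by (simp flip: powr_add)
    also have "\<bar>x\<bar> powr (-2) = 1 / x^2"
      using ax by (simp add: powr_minus powr_realpow divide_inverse)
    finally have "norm (of_nat (mu x) * complex_of_real (sgn x) * exp (- s * complex_of_real (ln \<bar>x\<bar>)))
        = real (mu x) / x^2 * \<bar>x\<bar> powr (2 - Re s)" by simp
    also have "\<dots> \<le> real (mu x) / x^2 * c"
      unfolding c_def using s \<rho> x by (intro mult_left_mono powr_mono2') auto
    finally show "norm (of_nat (mu x) * complex_of_real (sgn x) * exp (- s * complex_of_real (ln \<bar>x\<bar>)))
        \<le> norm (c * (real (mu x) / x^2))"
      unfolding norm_eq by (simp add: mult_ac)
  qed
  then show ?thesis by (rule abs_summable_summable)
qed

end

lemma infsum_odd_eq_0:
  fixes f :: "'a::group_add \<Rightarrow> 'b::real_normed_vector"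
  assumes A: "\<And>x. x \<in> A \<Longrightarrow> - x \<in> A" and odd: "\<And>x. f (- x) = - f x"
  shows "infsum f A = 0"
proof -
  have "bij_betw uminus A A"
    using A by (intro bij_betwI[of _ _ _ uminus]) auto
  then have "infsum f A = infsum (\<lambda>x. f (- x)) A" by (rule infsum_reindex_bij_betw[symmetric])
  also have "\<dots> = - infsum f A" by (simp add: odd infsum_uminus)
  finally have "(2::real) *\<^sub>R infsum f A = 0" by (simp add: scaleR_2 eq_neg_iff_add_eq_0)
  then show ?thesis by simp
qed

lemma (in window_bounded) eta_series_vanishes:
  assumes sym: "\<And>x. mu (- x) = mu x"
  shows "\<exists>\<sigma> U f. open U \<and> connected U \<and> 0 \<in> U \<and> {s. Re s > \<sigma>} \<subseteq> U \<and> f meromorphic_on U \<and>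
      (\<forall>s. Re s > \<sigma> \<longrightarrow> ((\<lambda>lam. of_nat (mu lam) * complex_of_real (sgn lam)
          * exp (- s * complex_of_real (ln \<bar>lam\<bar>))) has_sum f s) {lam. lam \<noteq> 0 \<and> mu lam > 0}) \<and>
      (f \<longlongrightarrow> 0) (at 0)"
proof (intro exI[of _ 2] exI[of _ UNIV] exI[of _ "\<lambda>_. 0"] conjI allI impI)
  fix s :: complex assume s: "Re s > 2"
  have zero: "infsum (\<lambda>lam. of_nat (mu lam) * complex_of_real (sgn lam) * exp (- s * complex_of_real (ln \<bar>lam\<bar>)))
      {lam. lam \<noteq> 0 \<and> mu lam > 0} = 0"
    by (rule infsum_odd_eq_0) (auto simp: sym sgn_minus)
  show "((\<lambda>lam. of_nat (mu lam) * complex_of_real (sgn lam) * exp (- s * complex_of_real (ln \<bar>lam\<bar>)))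
      has_sum 0) {lam. lam \<noteq> 0 \<and> mu lam > 0}"
    using has_sum_infsum[OF eta_series_summable_on[OF s]] unfolding zero .
qed (auto intro: analytic_on_imp_meromorphic_on)

theorem mainTheorem15:
  fixes n c :: nat and L :: "nat \<Rightarrow> real" and g :: "nat \<Rightarrow> rmat"
    and Jb :: "nat \<Rightarrow> real \<Rightarrow> rmat"
  assumes "c \<ge> 1"
    and "boundary_data n c L g Jb"
  shows "eta_vanishes n c L g Jb"
proof -
  obtain \<delta> where \<delta>: "\<delta> > 0" and win: "\<And>k. k < c \<Longrightarrow> window_determined n (g k) (Jb k) (L k) \<delta>"
    using boundary_window_determined[OF assms(2)] by blast
  interpret window_bounded "eig_mult n c L g Jb" \<delta> "c * (n+2)"
    by unfold_locales (auto intro: \<delta> window_eig_mult_sum_le[OF win \<delta>])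
  show ?thesis
    unfolding eta_vanishes_def Let_def by (rule eta_series_vanishes[OF eig_mult_uminus])
qed

end
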